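(* Let $n$ be a positive integer, $q=2^n$, $k$ an integer with $1\le k\le n-1$ and $k\notin\{n/3,2n/3\}$, $d=\gcd(n,k)$, and assume $n/d$ is odd. For $\alpha,\beta,\gamma\in\mathbb{F}_q$ let $$S(\alpha,\beta,\gamma)=\sum_{x\in\mathbb{F}_q}(-1)^{\mathrm{Tr}_1^n\left(\alpha x^{2^{2k}+1}+\beta x^{2^k+1}+\gamma x\right)}.$$ Let $\pi$ be a primitive element of $\mathbb{F}_q$ and let $\mathcal{C}$ be the binary cyclic code of length $q-1$ with parity-check polynomial $h_1(x)h_2(x)h_3(x)$, where $h_1,h_2,h_3$ are the minimal polynomials over $\mathbb{F}_2$ of $\pi^{-1},\pi^{-(2^k+1)},\pi^{-(2^{2k}+1)}$; its codewords are $c(\alpha,\beta,\gamma)=(c_0,\dots,c_{q-2})$ with $c_i=\mathrm{Tr}_1^n(\alpha\pi^{i(2^{2k}+1)}+\beta\pi^{i(2^k+1)}+\gamma\pi^i)$ for $(\alpha,\beta,\gamma)\in\mathbb{F}_q^3$, and the Hamming weight of $c(\alpha,\beta,\gamma)$ is $2^{n-1}-\tfrac12 S(\alpha,\beta,\gamma)$. Then, as $(\alpha,\beta,\gamma)$ runs over $\mathbb{F}_q^3$, the value $S(\alpha,\beta,\gamma)$ (with corresponding weight of $c(\alpha,\beta,\gamma)$) takes the following values with the following multiplicities: - $2^{(n+d)/2}$ (weight $2^{n-1}-2^{(n+d-2)/2}$): $\frac{(2^{n-d-1}+2^{(n-d-2)/2})(2^n-1)(2^{n+2d}-2^n-2^{n-d}+2^{2d})}{2^{2d}-1}$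 times; - $-2^{(n+d)/2}$ (weight $2^{n-1}+2^{(n+d-2)/2}$): $\frac{(2^{n-d-1}-2^{(n-d-2)/2})(2^n-1)(2^{n+2d}-2^n-2^{n-d}+2^{2d})}{2^{2d}-1}$ times; - $2^{(n+3d)/2}$ (weight $2^{n-1}-2^{(n+3d-2)/2}$): $\frac{(2^{n-3d-1}+2^{(n-3d-2)/2})(2^{n-d}-1)(2^n-1)}{2^{2d}-1}$ times; - $-2^{(n+3d)/2}$ (weight $2^{n-1}+2^{(n+3d-2)/2}$): $\frac{(2^{n-3d-1}-2^{(n-3d-2)/2})(2^{n-d}-1)(2^n-1)}{2^{2d}-1}$ times; - $0$ (weight $2^{n-1}$): $(2^n-1)(2^{2n}-2^{2n-d}+2^{2n-4d}+2^n-2^{n-d}-2^{n-3d}+1)$ times; - $2^n$ (weight $0$): $1$ time.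
   Context: $\mathrm{Tr}_1^n:\mathbb{F}_{2^n}\to\mathbb{F}_2$ is the absolute trace $x\mapsto\sum_{i=0}^{n-1}x^{2^i}$. *)

theory Defs
  imports Complex_Main "HOL-Library.Cardinality"
begin

text \<open>Absolute trace from F_{2^n} to F_2 (values 0 or 1 inside the field).\<close>
definition tr :: "nat \<Rightarrow> 'a::field \<Rightarrow> 'a" where
  "tr n x = (\<Sum>i<n. x ^ (2 ^ i))"

definition sgn2 :: "'a::field \<Rightarrow> int" where
  "sgn2 y = (if y = 0 then 1 else -1)"

definition S_sum :: "nat \<Rightarrow> nat \<Rightarrow> 'a::{field,finite} \<Rightarrow> 'a \<Rightarrow> 'a \<Rightarrow> int" where
  "S_sum n k \<alpha> \<beta> \<gamma> =
     (\<Sum>x\<in>(UNIV::'a set).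
        sgn2 (tr n (\<alpha> * x ^ (2^(2*k) + 1) + \<beta> * x ^ (2^k + 1) + \<gamma> * x)))"

definition primitive_elem :: "'a::field \<Rightarrow> bool" where
  "primitive_elem p \<longleftrightarrow> (\<forall>x. x \<noteq> 0 \<longrightarrow> (\<exists>i::nat. x = p ^ i))"

definition cw :: "nat \<Rightarrow> nat \<Rightarrow> 'a::field \<Rightarrow> 'a \<Rightarrow> 'a \<Rightarrow> 'a \<Rightarrow> nat \<Rightarrow> 'a" where
  "cw n k p \<alpha> \<beta> \<gamma> i =
     tr n (\<alpha> * p ^ (i * (2^(2*k) + 1)) + \<beta> * p ^ (i * (2^k + 1)) + \<gamma> * p ^ i)"

definition cw_weight :: "nat \<Rightarrow> nat \<Rightarrow> 'a::field \<Rightarrow> 'a \<Rightarrow> 'a \<Rightarrow> 'a \<Rightarrow> nat" where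
  "cw_weight n k p \<alpha> \<beta> \<gamma> = card {i. i < 2^n - 1 \<and> cw n k p \<alpha> \<beta> \<gamma> i \<noteq> 0}"

end

theory Submission
  imports Defs "HOL-Number_Theory.Residues" "HOL-Computational_Algebra.Computational_Algebra"
begin

text \<open>
  For fixed \<open>(\<alpha>, \<beta>)\<close>, \<open>Q(x) = \<alpha> x^(2^(2k)+1) + \<beta> x^(2^k+1)\<close> is a quadratic form over \<open>F_2\<close>
  on \<open>F_q\<close>, \<open>q = 2^n\<close>, with polar form \<open>Tr(x L(z))\<close> for an explicit \<open>F_2\<close>-linear map \<open>L\<close>.
  Squaring gives \<open>S(\<alpha>,\<beta>,\<gamma>)^2 \<in> {0, q |rad|}\<close>, where \<open>rad = ker L\<close> is the radical of \<open>Q\<close>.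
  The radical is an \<open>F_(2^d)\<close>-space of even codimension (it is the radical of the alternating
  form \<open>Tr_d(polar)\<close>), and \<open>L(z)^(2^(2k))\<close> is a \<open>2^k\<close>-polynomial of \<open>k\<close>-degree \<open>\<le> 4\<close>, so
  \<open>|rad| \<le> 2^(4d)\<close>.  As \<open>n/d\<close> is odd this leaves \<open>|rad| \<in> {2^d, 2^(3d)}\<close> for \<open>(\<alpha>,\<beta>) \<noteq> 0\<close>.
  The first two moments of \<open>S(\<alpha>,\<beta>,\<cdot>)\<close> then fix the distribution of \<open>S\<close> over \<open>\<gamma>\<close>, and the
  numbers of pairs in the two classes follow from counting all pairs and from the moment
  \<open>\<Sum> |rad(\<alpha>,\<beta>)| = q^2 + (q-1) q 2^d\<close> (a character sum).  Finally the weight of a codeword is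
  \<open>2^(n-1) - S/2\<close> because the powers of the primitive element run over \<open>F_q^*\<close>.
\<close>

lemma sum_hom_vanishes:
  fixes A :: "'a::monoid_add set" and h :: "'a \<Rightarrow> int"
  assumes closed: "\<And>x y. x \<in> A \<Longrightarrow> y \<in> A \<Longrightarrow> x + y \<in> A"
    and hom: "\<And>x y. x \<in> A \<Longrightarrow> y \<in> A \<Longrightarrow> h (x + y) = h x * h y"
    and self_inverse: "\<And>x. x \<in> A \<Longrightarrow> x + x = 0"
    and w: "w \<in> A" "h w = -1"
  shows "(\<Sum>x\<in>A. h x) = 0"
proof -
  have "(\<Sum>x\<in>A. h x) = (\<Sum>x\<in>A. h (x + w))"
    by (rule sum.reindex_bij_witness[of _ "\<lambda>x. x + w" "\<lambda>x. x + w"])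
       (use closed self_inverse w in \<open>auto simp: add.assoc\<close>)
  also have "\<dots> = (\<Sum>x\<in>A. - h x)"
    by (rule sum.cong) (use hom w in auto)
  finally show ?thesis by (simp add: sum_negf)
qed

lemma power_pred: "0 < m \<Longrightarrow> (a::'b::monoid_mult) ^ m = a * a ^ (m - 1)"
  by (cases m) simp_all

lemma odd_le_4: "odd (x::nat) \<Longrightarrow> x \<le> 4 \<Longrightarrow> x = 1 \<or> x = 3"
  by presburger

lemma pow2_neq_neg: "(2::int) ^ a \<noteq> - (2 ^ b)" "- ((2::int) ^ a) \<noteq> 2 ^ b"
  by (smt (verit) zero_less_power)+

lemma sum_prod_UNIV:
  fixes g :: "'b::finite \<Rightarrow> 'c::finite \<Rightarrow> int"
  shows "(\<Sum>a\<in>UNIV. \<Sum>b\<in>UNIV. g a b) = (\<Sum>ab\<in>UNIV. g (fst ab) (snd ab))"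
  by (simp add: sum.cartesian_product split_beta flip: UNIV_Times_UNIV)

lemma sum_swap3:
  "(\<Sum>a\<in>A. \<Sum>b\<in>B. \<Sum>c\<in>C. f a b c) = (\<Sum>c\<in>C. \<Sum>a\<in>A. \<Sum>b\<in>B. (f a b c :: int))"
proof -
  have "(\<Sum>a\<in>A. \<Sum>b\<in>B. \<Sum>c\<in>C. f a b c) = (\<Sum>a\<in>A. \<Sum>c\<in>C. \<Sum>b\<in>B. f a b c)"
    by (rule sum.cong[OF refl], rule sum.swap)
  also have "\<dots> = (\<Sum>c\<in>C. \<Sum>a\<in>A. \<Sum>b\<in>B. f a b c)" by (rule sum.swap)
  finally show ?thesis .
qed

lemma three_value_distribution:
  fixes f :: "'b \<Rightarrow> int"
  assumes fin: "finite A" and vals: "\<forall>x\<in>A. f x \<in> {0, v, -v}" and v: "v > 0"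
    and m1: "(\<Sum>x\<in>A. f x) = v * a" and m2: "(\<Sum>x\<in>A. (f x)^2) = v^2 * b"
  shows "2 * int (card {x\<in>A. f x = v}) = b + a"
    and "2 * int (card {x\<in>A. f x = -v}) = b - a"
    and "int (card {x\<in>A. f x = 0}) = int (card A) - b"
proof -
  define P M Z where "P = int (card {x\<in>A. f x = v})" and "M = int (card {x\<in>A. f x = -v})"
    and "Z = int (card {x\<in>A. f x = 0})"
  have "(\<Sum>x\<in>A. f x) = (\<Sum>x\<in>A. v * of_bool (f x = v) - v * of_bool (f x = -v))"
    by (rule sum.cong) (use vals v in auto)
  hence "v * a = v * (P - M)" using fin m1 by (simp add: sum_subtractf P_def M_def Int_def right_diff_distrib)
  hence 1: "a = P - M" using v by simp
  have "(\<Sum>x\<in>A. (f x)^2) = (\<Sum>x\<in>A. v^2 * of_bool (f x = v) + v^2 * of_bool (f x = -v))"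
    by (rule sum.cong) (use vals v in auto)
  hence "v^2 * b = v^2 * (P + M)" using fin m2 by (simp add: sum.distrib P_def M_def Int_def distrib_left)
  hence 2: "b = P + M" using v by simp
  have "(\<Sum>x\<in>A. 1::int) = (\<Sum>x\<in>A. of_bool (f x = 0) + of_bool (f x = v) + of_bool (f x = -v))"
    by (rule sum.cong) (use vals v in auto)
  hence 3: "int (card A) = Z + P + M" using fin by (simp add: sum.distrib P_def M_def Z_def Int_def)
  show "2 * P = b + a" "2 * M = b - a" "Z = int (card A) - b" using 1 2 3 by simp_all
qed

text \<open>The rational identity behind the multiplicity of the value \<open>0\<close> (\<open>q = 2^n\<close>, \<open>s = 2^d\<close>).\<close>
lemma zero_count_identity:
  fixes q s :: real
  assumes s: "s ^ 2 - 1 \<noteq> 0" "s \<noteq> 0"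
  shows "(q - 1) + (q - 1) * (q * s ^ 2 - q - q / s + s ^ 2) / (s ^ 2 - 1) * (q - q / s)
     + (q - 1) * (q / s - 1) / (s ^ 2 - 1) * (q - q / s ^ 3)
   = (q - 1) * (q ^ 2 - q ^ 2 / s + q ^ 2 / s ^ 4 + q - q / s - q / s ^ 3 + 1)"
proof -
  define u w where "u = inverse s" and "w = inverse (s ^ 2 - 1)"
  have su: "s * u = 1" and sw: "(s ^ 2 - 1) * w = 1" using s by (simp_all add: u_def w_def)
  have "(q - 1) + (q - 1) * (q * s ^ 2 - q - q * u + s ^ 2) * w * (q - q * u)
      + (q - 1) * (q * u - 1) * w * (q - q * u ^ 3)
    = (q - 1) * (q ^ 2 - q ^ 2 * u + q ^ 2 * u ^ 4 + q - q * u - q * u ^ 3 + 1)"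
    using su sw by Groebner_Basis.algebra
  thus ?thesis by (simp add: u_def w_def divide_inverse power_inverse)
qed

lemma weight_shift:
  fixes m e :: nat
  assumes "1 \<le> e" "e \<le> m"
  shows "(2::int) ^ m - 2 * int (2 ^ (m - 1) - 2 ^ (e - 1)) = 2 ^ e"
    and "(2::int) ^ m - 2 * int (2 ^ (m - 1) + 2 ^ (e - 1)) = - (2 ^ e)"
proof -
  have "(2::nat) ^ (e - 1) \<le> 2 ^ (m - 1)" using assms by (intro power_increasing) auto
  moreover have "(2::int) ^ m = 2 * 2 ^ (m - 1)" "(2::int) ^ e = 2 * 2 ^ (e - 1)"
    using assms by (simp_all add: power_pred)
  ultimately show "(2::int) ^ m - 2 * int (2 ^ (m - 1) - 2 ^ (e - 1)) = 2 ^ e"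
    and "(2::int) ^ m - 2 * int (2 ^ (m - 1) + 2 ^ (e - 1)) = - (2 ^ e)"
    by (simp_all add: of_nat_diff)
qed

text \<open>The relative trace \<open>Tr_d(x) = \<Sum>_(i<N) x^(2^(d i))\<close> from \<open>F_(2^(dN))\<close> to \<open>F_(2^d)\<close>.\<close>
definition rel_trace :: "nat \<Rightarrow> nat \<Rightarrow> 'a::field \<Rightarrow> 'a" where
  "rel_trace d N x = (\<Sum>i<N. x ^ (2 ^ (d * i)))"

lemma rel_trace_zero [simp]: "rel_trace e M (0::'a::field) = 0"
  by (simp add: rel_trace_def power_0_left)

locale alternating_form =
  fixes K :: "'a::field set" and B :: "'a \<Rightarrow> 'a \<Rightarrow> 'a"
  assumes K_zero: "0 \<in> K" and K_minus_one: "-1 \<in> K"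
    and K_inverse: "c \<in> K \<Longrightarrow> inverse c \<in> K"
    and B_in_K: "B x y \<in> K"
    and B_add: "B (x + y) z = B x z + B y z"
    and B_scale: "c \<in> K \<Longrightarrow> B (c * x) y = c * B x y"
    and B_sym: "B x y = B y x"
    and B_alt: "B x x = 0"
begin

lemma B_add_right: "B x (y + z) = B x y + B x z"
  using B_add B_sym by metis

lemma B_scale_right: "c \<in> K \<Longrightarrow> B x (c * y) = c * B x y"
  using B_scale B_sym by metis

lemma B_zero_right: "B x 0 = 0"
  using B_scale_right[OF K_zero, of x 0] by simp

lemma B_diff: "B (x - y) z = B x z - B y z"
  using B_add[of "x - y" y z] by simp

lemma B_diff_right: "B x (y - z) = B x y - B x z"
  using B_diff B_sym by metis

definition K_subspace :: "'a set \<Rightarrow> bool" where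
  "K_subspace U \<longleftrightarrow> 0 \<in> U \<and> (\<forall>x\<in>U. \<forall>y\<in>U. x + y \<in> U) \<and> (\<forall>c\<in>K. \<forall>x\<in>U. c * x \<in> U)"

definition radical :: "'a set \<Rightarrow> 'a set" where
  "radical U = {u\<in>U. \<forall>v\<in>U. B u v = 0}"

text \<open>Splitting off a hyperbolic pair: if \<open>x, y \<in> U\<close> with \<open>B x y = 1\<close>, then
  \<open>U\<close> is the direct sum of \<open>K x \<oplus> K y\<close> and the orthogonal complement \<open>U'\<close> of that plane,
  and \<open>U'\<close> has the same radical as \<open>U\<close>.\<close>
context
  fixes U x y
  assumes U: "K_subspace U" and x: "x \<in> U" and y: "y \<in> U" and Bxy: "B x y = 1"
begin

definition complement :: "'a set" where
  "complement = {z\<in>U. B x z = 0 \<and> B y z = 0}"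

lemma complement_subset: "complement \<subseteq> U"
  by (auto simp: complement_def)

definition project :: "'a \<Rightarrow> 'a" where
  "project w = w - B w y * x - B x w * y"

lemma Byx: "B y x = 1"
  using Bxy B_sym by metis

text \<open>Closure properties of \<open>U\<close>; subtraction uses \<open>-1 \<in> K\<close>.\<close>
lemma U_add: "a \<in> U \<Longrightarrow> b \<in> U \<Longrightarrow> a + b \<in> U"
  and U_scale: "c \<in> K \<Longrightarrow> a \<in> U \<Longrightarrow> c * a \<in> U"
  using U unfolding K_subspace_def by blast+

lemma U_diff: "a \<in> U \<Longrightarrow> b \<in> U \<Longrightarrow> a - b \<in> U"
  using U_add U_scale[OF K_minus_one] by (metis diff_conv_add_uminus mult_minus1)

lemma project_in_U: "w \<in> U \<Longrightarrow> project w \<in> U"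
  unfolding project_def by (intro U_diff U_scale B_in_K x y)

lemma project_orthogonal: "B x (project w) = 0" "B y (project w) = 0"
  unfolding project_def
  by (simp_all add: B_diff_right B_scale_right B_in_K B_alt Bxy Byx B_sym[of y w])

lemma project_in_complement: "w \<in> U \<Longrightarrow> project w \<in> complement"
  using project_in_U project_orthogonal by (simp add: complement_def)

lemma complement_subspace: "K_subspace complement"
  using U unfolding K_subspace_def complement_def
  by (auto simp: B_add_right B_scale_right B_zero_right)

lemma complement_decomposition:
  "bij_betw (\<lambda>(u, a, b). u + a * x + b * y) (complement \<times> K \<times> K) U"
proof (rule bij_betw_byWitness[where f' = "\<lambda>w. (project w, B w y, B x w)"])
  have coord: "B (u + a * x + b * y) y = a" "B x (u + a * x + b * y) = b"
    if "u \<in> complement" "a \<in> K" "b \<in> K" for u a b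
    using that by (simp_all add: B_add B_scale B_add_right B_scale_right Bxy B_alt
        complement_def B_sym[of u y])
  show "\<forall>t\<in>complement \<times> K \<times> K.
      (\<lambda>w. (project w, B w y, B x w)) ((\<lambda>(u, a, b). u + a * x + b * y) t) = t"
    by (auto simp: coord project_def)
  show "\<forall>w\<in>U. (\<lambda>(u, a, b). u + a * x + b * y) (project w, B w y, B x w) = w"
    by (simp add: project_def)
  show "(\<lambda>(u, a, b). u + a * x + b * y) ` (complement \<times> K \<times> K) \<subseteq> U"
    by (auto simp: complement_def intro!: U_add U_scale x y)
  show "(\<lambda>w. (project w, B w y, B x w)) ` U \<subseteq> complement \<times> K \<times> K"
    using project_in_complement B_in_K by auto
qed

lemma complement_radical: "radical complement = radical U"
proof (intro equalityI subsetI)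
  fix r assume r: "r \<in> radical complement"
  hence rU: "r \<in> U" and rx: "B r x = 0" and ry: "B r y = 0"
    by (simp_all add: radical_def complement_def B_sym[of r])
  have "B r w = 0" if w: "w \<in> U" for w
  proof -
    have "B r (project w) = 0" using r project_in_complement[OF w] by (simp add: radical_def)
    moreover have "w = project w + B w y * x + B x w * y" by (simp add: project_def)
    ultimately show ?thesis by (metis B_add_right B_scale_right B_in_K rx ry add_0 mult_zero_right)
  qed
  thus "r \<in> radical U" using rU by (simp add: radical_def)
next
  fix r assume "r \<in> radical U"
  thus "r \<in> radical complement" using x y by (auto simp: radical_def complement_def B_sym[of _ r])
qed

lemma card_complement: "card U = card complement * (card K * card K)"
  using bij_betw_same_card[OF complement_decomposition] by (simp add: card_cartesian_product)

lemma complement_smaller: "finite U \<Longrightarrow> card complement < card U"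
proof (rule psubset_card_mono)
  have "x \<notin> complement" using Byx by (simp add: complement_def)
  thus "complement \<subset> U" using x by (auto simp: complement_def)
qed

end

text \<open>The index of the radical of a symmetric alternating form on a finite \<open>K\<close>-space is
  an even power of \<open>|K|\<close> (the rank of an alternating form is even).\<close>
theorem card_radical:
  assumes "finite U" "K_subspace U"
  shows "\<exists>j. card U = card K ^ (2 * j) * card (radical U)"
  using assms
proof (induction "card U" arbitrary: U rule: less_induct)
  case less
  show ?case
  proof (cases "\<forall>u\<in>U. \<forall>v\<in>U. B u v = 0")
    case True
    hence "radical U = U" by (auto simp: radical_def)
    thus ?thesis by (intro exI[of _ 0]) simp
  next
    case False
    then obtain x y0 where x: "x \<in> U" and y0: "y0 \<in> U" and nz: "B x y0 \<noteq> 0" by blast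
    define y where "y = inverse (B x y0) * y0"
    have y: "y \<in> U" unfolding y_def using less.prems(2) K_inverse[OF B_in_K] y0
      by (auto simp: K_subspace_def)
    have Bxy: "B x y = 1" unfolding y_def using B_scale_right[OF K_inverse[OF B_in_K]] nz by simp
    note split = less.prems(2) x y Bxy
    have "finite (complement U x y)"
      using less.prems(1) complement_subset[OF split] by (rule rev_finite_subset)
    then obtain j where "card (complement U x y) = card K ^ (2 * j) * card (radical (complement U x y))"
      using less.hyps[OF complement_smaller[OF split less.prems(1)]] complement_subspace[OF split]
      by blast
    hence "card U = card K ^ (2 * Suc j) * card (radical U)"
      using card_complement[OF split] complement_radical[OF split] by (simp add: algebra_simps power_add)
    thus ?thesis by blast
  qed
qed

end

locale binary_field =
  fixes n :: nat
  assumes n_pos: "0 < n" and card_field: "CARD('a::{field,finite}) = 2 ^ n"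
begin

text \<open>The characteristic is a prime dividing \<open>2^n\<close>, hence \<open>2\<close>.\<close>
lemma char_two: "CHAR('a) = 2"
proof -
  have "CHAR('a) > 0" by (rule finite_imp_CHAR_pos) simp
  hence prime: "prime CHAR('a)" by (rule prime_CHAR_semidom)
  have "CHAR('a) dvd 2 ^ n" using CHAR_dvd_CARD[where 'a='a] card_field by simp
  hence "CHAR('a) dvd 2" using prime prime_dvd_power by blast
  thus ?thesis using prime by (metis prime_nat_iff two_is_prime_nat prime_gt_1_nat less_irrefl)
qed

lemma two_eq_zero [simp]: "(2::'a) = 0"
  using of_nat_CHAR[where 'a='a] char_two by simp

lemma add_self [simp]: "(x::'a) + x = 0"
  by (metis mult_2 two_eq_zero mult_zero_left)

lemma frobenius_add: "((x::'a) + y) ^ (2 ^ j) = x ^ (2 ^ j) + y ^ (2 ^ j)"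
  using freshmans_dream'[of "2 ^ j" j x y] char_two by simp

lemma frobenius_sum: "(sum (f::'b \<Rightarrow> 'a) A) ^ (2 ^ j) = (\<Sum>i\<in>A. f i ^ (2 ^ j))"
  using freshmans_dream_sum'[of "2 ^ j" j f A] char_two by simp

lemma pow_two_pow: "((x::'a) ^ (2 ^ a)) ^ (2 ^ b) = x ^ (2 ^ (a + b))"
  by (simp add: power_mult power_add)

lemma fermat: "(x::'a) ^ (2 ^ n) = x"
proof (cases "x = 0")
  case False
  have "x * (\<Prod>y\<in>UNIV-{0}. x * y) = x * x ^ (card (UNIV :: 'a set) - 1) * \<Prod>(UNIV-{0})"
    by (simp add: prod.distrib mult_ac)
  also have "x * x ^ (card (UNIV :: 'a set) - 1) = x ^ card (UNIV :: 'a set)"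
    using finite_UNIV_card_ge_0[where ?'a = 'a] by (simp flip: power_Suc)
  also have "(\<Prod>y\<in>UNIV-{0}. x * y) = (\<Prod>y\<in>UNIV-{0}. y)"
    by (rule prod.reindex_bij_witness[of _ "\<lambda>y. y / x" "\<lambda>y. x * y"]) (use False in auto)
  finally show ?thesis
    using card_field by simp
qed (use n_pos in auto)

lemma pow_fixed_iterate:
  assumes "(c::'a) ^ (2 ^ d) = c" shows "c ^ (2 ^ (d * i)) = c"
proof (induction i)
  case (Suc i)
  have "c ^ (2 ^ (d * Suc i)) = (c ^ (2 ^ (d * i))) ^ (2 ^ d)"
    by (simp add: pow_two_pow add.commute)
  thus ?case using Suc assms by simp
qed simp

lemma fermat_mult: "(x::'a) ^ (2 ^ (n * j)) = x"
  by (rule pow_fixed_iterate[OF fermat])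

abbreviation Tr :: "'a \<Rightarrow> 'a" where "Tr \<equiv> tr n"

lemma tr_rel_trace: "Tr x = rel_trace 1 n x"
  by (simp add: tr_def rel_trace_def)

lemma rel_trace_add: "rel_trace d N (x + y) = rel_trace d N x + rel_trace d N (y::'a)"
  by (simp add: rel_trace_def frobenius_add sum.distrib)

lemma rel_trace_scale:
  assumes "(c::'a) ^ (2 ^ d) = c" shows "rel_trace d N (c * x) = c * rel_trace d N x"
  by (simp add: rel_trace_def power_mult_distrib pow_fixed_iterate[OF assms] sum_distrib_left)

context
  fixes d N :: nat
  assumes dN: "d * N = n"
begin

lemma rel_trace_frobenius: "rel_trace d N ((x::'a) ^ (2 ^ d)) = rel_trace d N x"
proof -
  define f where "f i = x ^ (2 ^ (d * i))" for i
  have "(x ^ (2 ^ d)) ^ (2 ^ (d * i)) = f (Suc i)" for i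
    by (simp add: f_def pow_two_pow)
  moreover have "f N = f 0" using dN fermat by (simp add: f_def)
  moreover have "(\<Sum>i<Suc N. f i) = f 0 + (\<Sum>i<N. f (Suc i))"
    by (rule sum.lessThan_Suc_shift)
  ultimately show ?thesis by (simp add: rel_trace_def f_def add.commute)
qed

lemma rel_trace_frobenius_iter: "rel_trace d N ((x::'a) ^ (2 ^ (d * j))) = rel_trace d N x"
proof (induction j)
  case (Suc j)
  have "x ^ (2 ^ (d * Suc j)) = (x ^ (2 ^ (d * j))) ^ (2 ^ d)"
    by (simp add: pow_two_pow add.commute)
  thus ?case using Suc rel_trace_frobenius by simp
qed simp

lemma rel_trace_in_subfield: "(rel_trace d N (x::'a)) ^ (2 ^ d) = rel_trace d N x"
proof -
  have "(rel_trace d N x) ^ (2 ^ d) = rel_trace d N (x ^ (2 ^ d))"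
    by (simp add: rel_trace_def frobenius_sum pow_two_pow add.commute)
  thus ?thesis using rel_trace_frobenius by simp
qed

lemma rel_trace_adjoint:
  assumes "d dvd j" "j \<le> n * c"
  shows "rel_trace d N ((y::'a) ^ (2 ^ j) * w) = rel_trace d N (y * w ^ (2 ^ (n * c - j)))"
proof -
  obtain t where t: "n * c - j = d * t"
    using assms dN by (metis dvd_diff_nat dvd_mult2 dvd_triv_left dvdE)
  have "rel_trace d N (y ^ (2 ^ j) * w) = rel_trace d N ((y ^ (2 ^ j) * w) ^ (2 ^ (n * c - j)))"
    using rel_trace_frobenius_iter[of "y ^ (2 ^ j) * w" t] t by simp
  also have "(y ^ (2 ^ j) * w) ^ (2 ^ (n * c - j)) = y ^ (2 ^ (n * c)) * w ^ (2 ^ (n * c - j))"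
    using assms(2) by (simp add: power_mult_distrib pow_two_pow)
  finally show ?thesis by (simp add: fermat_mult)
qed

text \<open>The relative trace is a nonzero map: a polynomial of degree \<open>2^(n-d)\<close> cannot
  vanish on all \<open>2^n\<close> field elements.\<close>
lemma rel_trace_nonzero:
  assumes "d > 0" shows "\<exists>x::'a. rel_trace d N x \<noteq> 0"
proof (rule ccontr)
  assume "\<not> ?thesis"
  hence all0: "\<forall>x::'a. rel_trace d N x = 0" by auto
  have N: "N > 0" using dN n_pos by (cases N) auto
  define P :: "'a poly" where "P = (\<Sum>i<N. monom 1 (2 ^ (d * i)))"
  have evalP: "poly P x = rel_trace d N x" for x
    by (simp add: P_def poly_sum poly_monom rel_trace_def)
  have "coeff P (2 ^ (d * (N - 1))) = (\<Sum>i<N. if 2 ^ (d * i) = (2::nat) ^ (d * (N - 1)) then 1 else 0)"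
    by (simp add: P_def coeff_sum)
  also have "\<dots> = (\<Sum>i\<in>{N - 1}. 1)"
    by (rule sum.mono_neutral_cong_right) (use N assms in auto)
  finally have P0: "P \<noteq> 0" by auto
  have degP: "degree P \<le> 2 ^ (d * (N - 1))"
    unfolding P_def
  proof (rule degree_sum_le)
    fix i assume "i \<in> {..<N}"
    hence "(2::nat) ^ (d * i) \<le> 2 ^ (d * (N - 1))" by (intro power_increasing) auto
    thus "degree (monom (1::'a) (2 ^ (d * i))) \<le> 2 ^ (d * (N - 1))"
      using degree_monom_le order_trans by blast
  qed simp
  have "{x. poly P x = 0} = UNIV" using all0 evalP by auto
  hence "(2::nat) ^ n \<le> degree P" using card_poly_roots_bound[OF P0] card_field by simp
  hence "n \<le> d * (N - 1)" using degP by (metis order.trans power_le_imp_le_exp one_less_numeral_iff semiring_norm(76))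
  moreover have "d * (N - 1) < n" using assms dN N n_pos by (simp add: diff_mult_distrib2)
  ultimately show False by simp
qed

lemma rel_trace_nondegenerate:
  assumes "d > 0" "\<forall>x. rel_trace d N (x * z) = 0" shows "(z::'a) = 0"
proof (rule ccontr)
  assume z: "z \<noteq> 0"
  obtain w :: 'a where "rel_trace d N w \<noteq> 0" using rel_trace_nonzero[OF assms(1)] by blast
  moreover have "rel_trace d N ((w / z) * z) = 0" using assms(2) by blast
  ultimately show False using z by simp
qed

end

lemma tr_add: "Tr (x + y) = Tr x + Tr y"
  by (simp add: tr_rel_trace rel_trace_add)

lemma tr_binary: "Tr x = 0 \<or> Tr x = 1"
proof -
  have "(Tr x) ^ 2 = Tr x"
    using rel_trace_in_subfield[of 1 n x] by (simp add: tr_rel_trace)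
  hence "Tr x * (Tr x - 1) = 0" by (simp add: algebra_simps power2_eq_square)
  thus ?thesis by auto
qed

definition chi :: "'a \<Rightarrow> int" where "chi z = sgn2 (Tr z)"

lemma chi_add: "chi (a + b) = chi a * chi b"
  using tr_binary[of a] tr_binary[of b] by (auto simp: chi_def sgn2_def tr_add)

lemma chi_values: "chi a = 1 \<or> chi a = -1"
  by (simp add: chi_def sgn2_def)

lemma chi_zero [simp]: "chi 0 = 1"
  by (simp add: chi_def sgn2_def tr_def power_0_left)

lemma chi_orthogonality: "(\<Sum>x\<in>UNIV. chi (c * x)) = (if c = 0 then 2 ^ n else 0)"
proof (cases "c = 0")
  case True thus ?thesis using card_field by simp
next
  case False
  obtain w where w: "Tr w \<noteq> 0" using rel_trace_nondegenerate[of 1 n 1] n_pos by (auto simp: tr_rel_trace)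
  have "chi (c * (w / c)) = -1" using w False tr_binary[of w] by (simp add: chi_def sgn2_def)
  hence "(\<Sum>x\<in>UNIV. chi (c * x)) = 0"
    by (intro sum_hom_vanishes[of UNIV _ "w / c"]) (auto simp: distrib_left chi_add)
  thus ?thesis using False by simp
qed

definition linpoly :: "nat \<Rightarrow> (nat \<Rightarrow> 'a) \<Rightarrow> nat \<Rightarrow> 'a \<Rightarrow> 'a" where
  "linpoly k a m x = (\<Sum>i\<le>m. a i * x ^ (2 ^ (k * i)))"

lemma linpoly_zero [simp]: "linpoly k a m 0 = 0"
  by (simp add: linpoly_def power_0_left)

lemma frobenius_shift_power:
  "((x::'a) ^ (2 ^ k) + c * x) ^ (2 ^ (k * j)) = x ^ (2 ^ (k * Suc j)) + c ^ (2 ^ (k * j)) * x ^ (2 ^ (k * j))"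
  by (simp add: frobenius_add pow_two_pow power_mult_distrib)

text \<open>Division with remainder of a \<open>2^k\<close>-polynomial by the linear factor \<open>x^(2^k) + c x\<close>
  (in the sense of composition): the quotient has degree one less and the same leading coefficient.\<close>
lemma linpoly_divide:
  "\<exists>b r. (\<forall>x. linpoly k a (Suc m) x = linpoly k b m (x ^ (2 ^ k) + c * x) + r * x) \<and> b m = a (Suc m)"
proof (induction m arbitrary: a)
  case 0
  show ?case
  proof (intro exI conjI allI)
    fix x
    show "linpoly k a (Suc 0) x = linpoly k (\<lambda>_. a (Suc 0)) 0 (x ^ (2 ^ k) + c * x) + (a 0 + a (Suc 0) * c) * x"
      by (simp add: linpoly_def algebra_simps)
  qed simp
next
  case (Suc m)
  define top where "top = a (Suc (Suc m))"
  define a' where "a' = a(Suc m := a (Suc m) + top * c ^ (2 ^ (k * Suc m)))"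
  obtain b' r where br: "\<forall>x. linpoly k a' (Suc m) x = linpoly k b' m (x ^ (2 ^ k) + c * x) + r * x"
    using Suc.IH[of a'] by blast
  have a': "linpoly k a (Suc m) x = linpoly k a' (Suc m) x + top * c ^ (2 ^ (k * Suc m)) * x ^ (2 ^ (k * Suc m))" for x
    by (simp add: linpoly_def a'_def algebra_simps)
  have b: "linpoly k (b'(Suc m := top)) (Suc m) y = linpoly k b' m y + top * y ^ (2 ^ (k * Suc m))" for y
    by (simp add: linpoly_def)
  show ?case
  proof (intro exI conjI allI)
    fix x
    have "linpoly k a (Suc (Suc m)) x = linpoly k a (Suc m) x + top * x ^ (2 ^ (k * Suc (Suc m)))"
      by (simp add: linpoly_def top_def)
    thus "linpoly k a (Suc (Suc m)) x = linpoly k (b'(Suc m := top)) (Suc m) (x ^ (2 ^ k) + c * x) + r * x"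
      unfolding a' b frobenius_shift_power br[rule_format] by (simp add: algebra_simps)
  qed (simp add: top_def)
qed

text \<open>The fibres of \<open>x \<mapsto> x^(2^k) + c x\<close> are cosets of its kernel \<open>v \<cdot> F_(2^k)\<close>, where
  \<open>v \<noteq> 0\<close> is a kernel element.\<close>
lemma card_fibre_frobenius_shift:
  assumes v: "v \<noteq> 0" "v ^ (2 ^ k) = c * (v::'a)"
  shows "card {x. x ^ (2 ^ k) + c * x = y} \<le> card {t::'a. t ^ (2 ^ k) = t}"
proof (cases "\<exists>x0. x0 ^ (2 ^ k) + c * x0 = y")
  case True
  then obtain x0 where x0: "x0 ^ (2 ^ k) + c * x0 = y" by blast
  have "{x. x ^ (2 ^ k) + c * x = y} \<subseteq> (\<lambda>t. x0 + t * v) ` {t. t ^ (2 ^ k) = t}"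
  proof
    fix x assume "x \<in> {x. x ^ (2 ^ k) + c * x = y}"
    moreover have "(x + x0) ^ (2 ^ k) + c * (x + x0) = (x ^ (2 ^ k) + c * x) + (x0 ^ (2 ^ k) + c * x0)"
      by (simp add: frobenius_add algebra_simps)
    ultimately have "(x + x0) ^ (2 ^ k) + c * (x + x0) = 0" using x0 by simp
    hence w: "(x + x0) ^ (2 ^ k) = c * (x + x0)"
      by (metis add_left_cancel add_self)
    define t where "t = (x + x0) / v"
    have "c \<noteq> 0" using v by auto
    hence "t ^ (2 ^ k) = t"
      using v by (simp add: t_def power_divide w)
    moreover have "x = x0 + t * v"
      using v by (simp add: t_def)
    ultimately show "x \<in> (\<lambda>t. x0 + t * v) ` {t. t ^ (2 ^ k) = t}" by blast
  qed
  hence "card {x. x ^ (2 ^ k) + c * x = y} \<le> card ((\<lambda>t. x0 + t * v) ` {t. t ^ (2 ^ k) = t})"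
    by (intro card_mono) auto
  also have "\<dots> \<le> card {t::'a. t ^ (2 ^ k) = t}" by (rule card_image_le) simp
  finally show ?thesis .
qed simp

text \<open>Root bound for \<open>2^k\<close>-polynomials: a nonzero one of \<open>k\<close>-degree \<open>m\<close> has at most
  \<open>|F_(2^k) \<inter> F|^m\<close> roots, since its root set is a vector space over that field.\<close>
lemma linpoly_roots_bound:
  assumes "a m \<noteq> 0"
  shows "card {x. linpoly k a m x = 0} \<le> card {c::'a. c ^ (2 ^ k) = c} ^ m"
  using assms
proof (induction m arbitrary: a)
  case 0
  hence "{x. linpoly k a 0 x = 0} = {0}" by (auto simp: linpoly_def)
  thus ?case by simp
next
  case (Suc m)
  define K where "K = {c::'a. c ^ (2 ^ k) = c}"
  define V where "V = {x. linpoly k a (Suc m) x = 0}"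
  have "0 \<in> K" by (simp add: K_def)
  hence K_pos: "card K \<ge> 1" by (metis One_nat_def Suc_leI card_gt_0_iff empty_iff finite)
  show ?case
  proof (cases "V \<subseteq> {0}")
    case True
    hence "card V \<le> 1" using card_mono[of "{0}" V] by simp
    moreover have "1 \<le> card K ^ Suc m" using K_pos by simp
    ultimately show ?thesis unfolding V_def K_def by linarith
  next
    case False
    then obtain v where vV: "v \<in> V" and v0: "v \<noteq> 0" by blast
    define c where "c = v ^ (2 ^ k) / v"
    have cv: "v ^ (2 ^ k) = c * v" using v0 by (simp add: c_def)
    obtain b r where br: "\<forall>x. linpoly k a (Suc m) x = linpoly k b m (x ^ (2 ^ k) + c * x) + r * x"
      and bm: "b m = a (Suc m)" using linpoly_divide[of k a m c] by blast
    define \<phi> where "\<phi> x = x ^ (2 ^ k) + c * x" for x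
    have "r * v = 0" using vV br cv by (simp add: V_def)
    hence "r = 0" using v0 by simp
    hence "\<phi> ` V \<subseteq> {y. linpoly k b m y = 0}" using br by (auto simp: V_def \<phi>_def)
    hence "card (\<phi> ` V) \<le> card {y. linpoly k b m y = 0}" by (intro card_mono) simp_all
    also have "\<dots> \<le> card K ^ m" using Suc.IH[of b] bm Suc.prems by (simp add: K_def)
    finally have image: "card (\<phi> ` V) \<le> card K ^ m" .
    have "card V \<le> card (\<Union>y\<in>\<phi> ` V. {x. \<phi> x = y})" by (intro card_mono) auto
    also have "\<dots> \<le> (\<Sum>y\<in>\<phi> ` V. card {x. \<phi> x = y})" by (rule card_UN_le) simp
    also have "\<dots> \<le> (\<Sum>y\<in>\<phi> ` V. card K)"
      using card_fibre_frobenius_shift[OF v0 cv] by (intro sum_mono) (simp add: \<phi>_def K_def)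
    also have "\<dots> \<le> card K ^ m * card K" using image by simp
    finally show ?thesis by (simp add: V_def K_def mult.commute)
  qed
qed

lemma fixed_gcd:
  assumes "(c::'a) ^ (2 ^ a) = c" "c ^ (2 ^ b) = c"
  shows "c ^ (2 ^ (gcd a b)) = c"
  using assms
proof (induction a b rule: gcd_nat_induct)
  case (step m b)
  have "c ^ (2 ^ m) = (c ^ (2 ^ (b * (m div b)))) ^ (2 ^ (m mod b))"
    by (metis pow_two_pow div_mult_mod_eq mult.commute)
  hence "c ^ (2 ^ (m mod b)) = c" using step.prems pow_fixed_iterate by metis
  hence "c ^ (2 ^ gcd b (m mod b)) = c" using step.IH step.prems(2) by blast
  thus ?case using step.hyps by (simp add: gcd_non_0_nat)
qed simp

end

locale quadratic_setting = binary_field n for n +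
  fixes k d :: nat and p :: "'a::{field,finite}"
  assumes k_ge: "1 \<le> k" and k_le: "k \<le> n - 1" and d_def: "d = gcd n k"
    and prim: "primitive_elem p"
begin

abbreviation N :: nat where "N \<equiv> n div d"

lemma d_pos: "d > 0" using d_def n_pos by simp
lemma dN: "d * N = n" using d_def by simp
lemma d_dvd_k: "d dvd k" using d_def by simp

lemma card_nonzero: "card (UNIV - {0::'a}) = 2 ^ n - 1"
  using card_field by (simp add: card_Diff_subset)

lemma p_nonzero: "p \<noteq> 0"
proof
  assume p0: "p = 0"
  have "UNIV - {0::'a} \<subseteq> {1}"
  proof
    fix x :: 'a assume "x \<in> UNIV - {0}"
    then obtain i where "x = p ^ i" "x \<noteq> 0" using prim unfolding primitive_elem_def by blast
    thus "x \<in> {1}" using p0 by (cases i) auto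
  qed
  hence "card (UNIV - {0::'a}) \<le> card {1::'a}" by (intro card_mono) auto
  moreover have "(2::nat) ^ 2 \<le> 2 ^ n" using k_ge k_le by (intro power_increasing) auto
  ultimately show False using card_nonzero by simp
qed

lemma p_order: "p ^ (2 ^ n - 1) = 1"
proof -
  have "p * p ^ (2 ^ n - 1) = p ^ (2 ^ n)" by (rule power_pred[symmetric]) simp
  also have "\<dots> = p * 1" using fermat by simp
  finally show ?thesis using p_nonzero by simp
qed

lemma p_power_mod: "p ^ i = p ^ (i mod (2 ^ n - 1))"
proof -
  have "p ^ i = (p ^ (2 ^ n - 1)) ^ (i div (2 ^ n - 1)) * p ^ (i mod (2 ^ n - 1))"
    by (metis div_mult_mod_eq power_add power_mult mult.commute)
  thus ?thesis using p_order by simp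
qed

lemma p_powers_bij: "bij_betw (\<lambda>i. p ^ i) {..<2 ^ n - 1} (UNIV - {0})"
proof -
  have q1: "(2::nat) ^ n - 1 > 0" using one_less_power[of "2::nat" n] n_pos by simp
  have "(\<lambda>i. p ^ i) ` {..<2 ^ n - 1} = UNIV - {0}"
  proof
    show "UNIV - {0} \<subseteq> (\<lambda>i. p ^ i) ` {..<2 ^ n - 1}"
    proof
      fix x :: 'a assume "x \<in> UNIV - {0}"
      then obtain i where "x = p ^ (i mod (2 ^ n - 1))"
        using prim p_power_mod unfolding primitive_elem_def by auto
      thus "x \<in> (\<lambda>i. p ^ i) ` {..<2 ^ n - 1}" using q1 by auto
    qed
  qed (use p_nonzero in auto)
  moreover from this have "inj_on (\<lambda>i. p ^ i) {..<2 ^ n - 1}"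
    by (intro eq_card_imp_inj_on) (simp_all add: card_nonzero)
  ultimately show ?thesis by (simp add: bij_betw_def)
qed

text \<open>The subfield \<open>F_(2^d)\<close>; since \<open>d = gcd(n, k)\<close> it is also the fixed field of \<open>x \<mapsto> x^(2^k)\<close>.\<close>
definition subfield :: "'a set" where "subfield = {c. c ^ (2 ^ d) = c}"

lemma subfield_power: "c \<in> subfield \<Longrightarrow> d dvd j \<Longrightarrow> c ^ (2 ^ j) = c"
  using pow_fixed_iterate[of c d] unfolding subfield_def by (auto elim!: dvdE)

lemma fixed_k_iff_subfield: "(c::'a) ^ (2 ^ k) = c \<longleftrightarrow> c \<in> subfield"
proof
  assume "c ^ (2 ^ k) = c"
  hence "c ^ (2 ^ gcd n k) = c" by (rule fixed_gcd[OF fermat])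
  thus "c \<in> subfield" unfolding subfield_def by (simp add: d_def)
qed (rule subfield_power[OF _ d_dvd_k])

lemma subfield_inverse: "c \<in> subfield \<Longrightarrow> inverse c \<in> subfield"
  by (simp add: subfield_def power_inverse)

text \<open>\<open>|F_(2^d)| \<le> 2^d\<close>: its elements are roots of \<open>x^(2^d) - x\<close>.\<close>
lemma card_subfield_le: "card subfield \<le> 2 ^ d"
proof -
  define P :: "'a poly" where "P = monom 1 (2 ^ d) - [:0, 1:]"
  have "(2::nat) ^ d \<noteq> 1" using d_pos by simp
  hence "coeff P (2 ^ d) = 1" by (simp add: P_def coeff_pCons split: nat.split)
  hence P0: "P \<noteq> 0" by auto
  have "degree P \<le> 2 ^ d"
    unfolding P_def by (intro degree_diff_le degree_monom_le) simp
  moreover have "subfield = {x. poly P x = 0}" by (simp add: subfield_def P_def poly_monom)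
  ultimately show ?thesis using card_poly_roots_bound[OF P0] by simp
qed

text \<open>Conversely the subgroup of order \<open>2^d - 1\<close> generated by \<open>p^M\<close>, \<open>M = (2^n-1)/(2^d-1)\<close>,
  consists of elements of the subfield.\<close>
lemma card_subfield_ge: "2 ^ d \<le> card subfield"
proof -
  have "(2::int) ^ n - 1 = (2 ^ d) ^ N - 1" using dN by (metis power_mult)
  also have "\<dots> = (2 ^ d - 1) * (\<Sum>i<N. (2 ^ d) ^ i)" by (rule power_diff_1_eq)
  finally have "int (2 ^ d - 1) dvd int (2 ^ n - 1)" by (simp add: of_nat_diff)
  hence "2 ^ d - 1 dvd (2::nat) ^ n - 1" by (simp only: int_dvd_int_iff)
  then obtain M :: nat where M: "2 ^ n - 1 = (2 ^ d - 1) * M" by (elim dvdE)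
  have M_pos: "M > 0" using M one_less_power[of "2::nat" n] n_pos by (cases M) auto
  define G where "G = (\<lambda>j. p ^ (j * M)) ` {..<2 ^ d - 1}"
  have "inj_on (\<lambda>j. p ^ (j * M)) {..<2 ^ d - 1}"
  proof (rule inj_onI)
    fix i j assume ij: "i \<in> {..<2 ^ d - 1}" "j \<in> {..<2 ^ d - 1}" "p ^ (i * M) = p ^ (j * M)"
    have "t * M < 2 ^ n - 1" if "t < 2 ^ d - 1" for t
      unfolding M using that M_pos by (rule mult_strict_right_mono)
    hence "i * M = j * M"
      using ij inj_onD[OF bij_betw_imp_inj_on[OF p_powers_bij]] by blast
    thus "i = j" using M_pos by simp
  qed
  hence "card G = 2 ^ d - 1" by (simp add: G_def card_image)
  moreover have "insert 0 G \<subseteq> subfield"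
  proof
    fix x assume "x \<in> insert 0 G"
    then consider "x = 0" | j where "x = p ^ (j * M)" by (auto simp: G_def)
    thus "x \<in> subfield"
    proof cases
      case 2
      have "x ^ (2 ^ d - 1) = p ^ (j * ((2 ^ d - 1) * M))"
        using 2 by (simp add: power_mult[symmetric] algebra_simps)
      also have "\<dots> = (p ^ (2 ^ n - 1)) ^ j" using M by (simp add: power_mult[symmetric] mult.commute)
      finally have "x ^ (2 ^ d - 1) = 1" using p_order by simp
      moreover have "x ^ (2 ^ d) = x * x ^ (2 ^ d - 1)" by (rule power_pred) simp
      ultimately show ?thesis by (simp add: subfield_def)
    qed (simp add: subfield_def)
  qed
  hence "card (insert 0 G) \<le> card subfield" by (intro card_mono) simp_all
  moreover have "0 \<notin> G" using p_nonzero by (auto simp: G_def)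
  ultimately show ?thesis by simp
qed

lemma card_subfield: "card subfield = 2 ^ d"
  using card_subfield_le card_subfield_ge by simp

text \<open>The quadratic form \<open>Q(x) = \<alpha> x^(2^(2k)+1) + \<beta> x^(2^k+1)\<close>, its polar bilinear form, and
  the \<open>F_2\<close>-linear map \<open>L\<close> representing the polar form through the trace form.\<close>
definition Q :: "'a \<Rightarrow> 'a \<Rightarrow> 'a \<Rightarrow> 'a" where
  "Q \<alpha> \<beta> x = \<alpha> * x ^ (2 ^ (2 * k) + 1) + \<beta> * x ^ (2 ^ k + 1)"

definition polar :: "'a \<Rightarrow> 'a \<Rightarrow> 'a \<Rightarrow> 'a \<Rightarrow> 'a" where
  "polar \<alpha> \<beta> x z = \<alpha> * (x ^ (2 ^ (2 * k)) * z + x * z ^ (2 ^ (2 * k)))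
                   + \<beta> * (x ^ (2 ^ k) * z + x * z ^ (2 ^ k))"

definition Lin :: "'a \<Rightarrow> 'a \<Rightarrow> 'a \<Rightarrow> 'a" where
  "Lin \<alpha> \<beta> z = \<alpha> * z ^ (2 ^ (2 * k)) + \<beta> * z ^ (2 ^ k)
     + (\<alpha> * z) ^ (2 ^ (2 * n - 2 * k)) + (\<beta> * z) ^ (2 ^ (n - k))"

definition rad :: "'a \<Rightarrow> 'a \<Rightarrow> 'a set" where
  "rad \<alpha> \<beta> = {z. Lin \<alpha> \<beta> z = 0}"

definition expsum :: "'a \<Rightarrow> 'a \<Rightarrow> 'a \<Rightarrow> int" where
  "expsum \<alpha> \<beta> \<gamma> = (\<Sum>x\<in>UNIV. chi (Q \<alpha> \<beta> x + \<gamma> * x))"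

lemma S_sum_expsum: "S_sum n k \<alpha> \<beta> \<gamma> = expsum \<alpha> \<beta> \<gamma>"
  by (simp add: S_sum_def expsum_def chi_def Q_def)

lemma Q_add: "Q \<alpha> \<beta> (x + z) = Q \<alpha> \<beta> x + Q \<alpha> \<beta> z + polar \<alpha> \<beta> x z"
proof -
  have "(x + z) ^ (2 ^ j + 1) = x ^ (2 ^ j + 1) + z ^ (2 ^ j + 1) + (x ^ (2 ^ j) * z + x * z ^ (2 ^ j))"
    for j :: nat
    by (simp add: frobenius_add algebra_simps)
  thus ?thesis unfolding Q_def polar_def by (simp add: algebra_simps)
qed

lemma polar_sym: "polar \<alpha> \<beta> x z = polar \<alpha> \<beta> z x"
  unfolding polar_def by (simp add: algebra_simps)

lemma polar_self: "polar \<alpha> \<beta> x x = 0"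
  unfolding polar_def by simp

lemma polar_add: "polar \<alpha> \<beta> (x + y) z = polar \<alpha> \<beta> x z + polar \<alpha> \<beta> y z"
  unfolding polar_def by (simp add: frobenius_add algebra_simps)

lemma polar_scale: "c \<in> subfield \<Longrightarrow> polar \<alpha> \<beta> (c * x) z = c * polar \<alpha> \<beta> x z"
  using subfield_power[of c k] subfield_power[of c "2 * k"] d_dvd_k
  unfolding polar_def by (simp add: power_mult_distrib algebra_simps)

lemma Lin_add: "Lin \<alpha> \<beta> (x + z) = Lin \<alpha> \<beta> x + Lin \<alpha> \<beta> z"
  unfolding Lin_def by (simp add: algebra_simps frobenius_add)

text \<open>\<open>Q(x+z) - Q(x) - Q(z)\<close> equals \<open>Tr(x L(z))\<close> after taking any relative trace to a subfield
  \<open>F_(2^e)\<close> with \<open>e | k\<close>; this is the adjointness of the Frobenius powers.\<close>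
lemma rel_trace_polar:
  assumes "e dvd k" "e * M = n"
  shows "rel_trace e M (polar \<alpha> \<beta> x z) = rel_trace e M (x * Lin \<alpha> \<beta> z)"
proof -
  have adj1: "rel_trace e M (x ^ (2 ^ (2 * k)) * (\<alpha> * z)) = rel_trace e M (x * (\<alpha> * z) ^ (2 ^ (2 * n - 2 * k)))"
    using rel_trace_adjoint[OF assms(2), of "2 * k" 2 x "\<alpha> * z"] assms(1) k_le by (simp add: mult.commute)
  have adj2: "rel_trace e M (x ^ (2 ^ k) * (\<beta> * z)) = rel_trace e M (x * (\<beta> * z) ^ (2 ^ (n - k)))"
    using rel_trace_adjoint[OF assms(2), of k 1 x "\<beta> * z"] assms(1) k_le by simp
  have "polar \<alpha> \<beta> x z = x ^ (2 ^ (2 * k)) * (\<alpha> * z) + x * (\<alpha> * z ^ (2 ^ (2 * k)))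
        + (x ^ (2 ^ k) * (\<beta> * z) + x * (\<beta> * z ^ (2 ^ k)))"
    unfolding polar_def by (simp add: algebra_simps)
  hence "rel_trace e M (polar \<alpha> \<beta> x z)
      = rel_trace e M (x ^ (2 ^ (2 * k)) * (\<alpha> * z)) + rel_trace e M (x * (\<alpha> * z ^ (2 ^ (2 * k))))
        + (rel_trace e M (x ^ (2 ^ k) * (\<beta> * z)) + rel_trace e M (x * (\<beta> * z ^ (2 ^ k))))"
    by (simp add: rel_trace_add)
  thus ?thesis unfolding adj1 adj2 Lin_def by (simp add: rel_trace_add algebra_simps)
qed

lemma chi_polar: "chi (polar \<alpha> \<beta> x z) = chi (x * Lin \<alpha> \<beta> z)"
  using rel_trace_polar[of 1 n] by (simp add: chi_def tr_rel_trace)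

lemma Lin_zero [simp]: "Lin \<alpha> \<beta> 0 = 0"
  by (simp add: Lin_def power_0_left)

lemma rad_add: "x \<in> rad \<alpha> \<beta> \<Longrightarrow> z \<in> rad \<alpha> \<beta> \<Longrightarrow> x + z \<in> rad \<alpha> \<beta>"
  by (simp add: rad_def Lin_add)

lemma zero_in_rad [simp]: "0 \<in> rad \<alpha> \<beta>"
  by (simp add: rad_def)

lemma expsum_square:
  "(expsum \<alpha> \<beta> \<gamma>)^2 = 2 ^ n * (\<Sum>z\<in>rad \<alpha> \<beta>. chi (Q \<alpha> \<beta> z + \<gamma> * z))"
proof -
  define f where "f x = Q \<alpha> \<beta> x + \<gamma> * x" for x
  have f_add: "f x + f (x + z) = f z + polar \<alpha> \<beta> x z" for x z
    by (simp add: f_def Q_add algebra_simps)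
  have "(expsum \<alpha> \<beta> \<gamma>)^2 = (\<Sum>x\<in>UNIV. \<Sum>y\<in>UNIV. chi (f x) * chi (f y))"
    by (simp add: expsum_def f_def power2_eq_square sum_product)
  also have "\<dots> = (\<Sum>x\<in>UNIV. \<Sum>z\<in>UNIV. chi (f x) * chi (f (x + z)))"
  proof (rule sum.cong[OF refl])
    fix x
    show "(\<Sum>y\<in>UNIV. chi (f x) * chi (f y)) = (\<Sum>z\<in>UNIV. chi (f x) * chi (f (x + z)))"
      by (rule sum.reindex_bij_witness[of _ "\<lambda>y. x + y" "\<lambda>y. x + y"])
         (auto simp: add.assoc[symmetric])
  qed
  also have "\<dots> = (\<Sum>x\<in>UNIV. \<Sum>z\<in>UNIV. chi (f z) * chi (x * Lin \<alpha> \<beta> z))"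
  proof (intro sum.cong refl)
    fix x z
    have "chi (f x) * chi (f (x + z)) = chi (f x + f (x + z))" by (simp add: chi_add)
    also have "\<dots> = chi (f z) * chi (polar \<alpha> \<beta> x z)" by (simp add: f_add chi_add)
    finally show "chi (f x) * chi (f (x + z)) = chi (f z) * chi (x * Lin \<alpha> \<beta> z)"
      by (simp add: chi_polar)
  qed
  also have "\<dots> = (\<Sum>z\<in>UNIV. chi (f z) * (\<Sum>x\<in>UNIV. chi (Lin \<alpha> \<beta> z * x)))"
    by (subst sum.swap) (simp add: sum_distrib_left mult.commute)
  also have "\<dots> = (\<Sum>z\<in>UNIV. if Lin \<alpha> \<beta> z = 0 then 2 ^ n * chi (f z) else 0)"
    by (intro sum.cong refl) (simp add: chi_orthogonality)
  also have "\<dots> = 2 ^ n * (\<Sum>z\<in>rad \<alpha> \<beta>. chi (f z))"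
    by (simp add: sum.If_cases rad_def sum_distrib_left)
  finally show ?thesis by (simp add: f_def)
qed

text \<open>On the radical, \<open>x \<mapsto> \<chi>(Q(x) + \<gamma> x)\<close> is a character, so its sum is \<open>0\<close> or \<open>|rad|\<close>.\<close>
lemma rad_sum_cases:
  "(\<Sum>z\<in>rad \<alpha> \<beta>. chi (Q \<alpha> \<beta> z + \<gamma> * z)) \<in> {0, int (card (rad \<alpha> \<beta>))}"
proof (cases "\<exists>w\<in>rad \<alpha> \<beta>. chi (Q \<alpha> \<beta> w + \<gamma> * w) = -1")
  case True
  then obtain w where "w \<in> rad \<alpha> \<beta>" "chi (Q \<alpha> \<beta> w + \<gamma> * w) = -1" by blast
  moreover have "chi (Q \<alpha> \<beta> (x + z) + \<gamma> * (x + z)) = chi (Q \<alpha> \<beta> x + \<gamma> * x) * chi (Q \<alpha> \<beta> z + \<gamma> * z)"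
    if "x \<in> rad \<alpha> \<beta>" "z \<in> rad \<alpha> \<beta>" for x z
  proof -
    have "chi (polar \<alpha> \<beta> x z) = 1" using that by (simp add: chi_polar rad_def)
    moreover have "Q \<alpha> \<beta> (x + z) + \<gamma> * (x + z)
        = (Q \<alpha> \<beta> x + \<gamma> * x) + (Q \<alpha> \<beta> z + \<gamma> * z) + polar \<alpha> \<beta> x z"
      by (simp add: Q_add algebra_simps)
    ultimately show ?thesis by (simp add: chi_add)
  qed
  ultimately have "(\<Sum>z\<in>rad \<alpha> \<beta>. chi (Q \<alpha> \<beta> z + \<gamma> * z)) = 0"
    by (intro sum_hom_vanishes) (auto intro: rad_add)
  thus ?thesis by simp
next
  case False
  hence "\<forall>z\<in>rad \<alpha> \<beta>. chi (Q \<alpha> \<beta> z + \<gamma> * z) = 1" using chi_values by blast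
  thus ?thesis by simp
qed

lemma expsum_square_cases:
  "(expsum \<alpha> \<beta> \<gamma>)^2 \<in> {0, 2 ^ n * int (card (rad \<alpha> \<beta>))}"
  using rad_sum_cases[of \<alpha> \<beta> \<gamma>] expsum_square[of \<alpha> \<beta> \<gamma>] by auto

lemma expsum_moment1: "(\<Sum>\<gamma>\<in>UNIV. expsum \<alpha> \<beta> \<gamma>) = 2 ^ n"
proof -
  have "(\<Sum>\<gamma>\<in>UNIV. expsum \<alpha> \<beta> \<gamma>) = (\<Sum>x\<in>UNIV. chi (Q \<alpha> \<beta> x) * (\<Sum>\<gamma>\<in>UNIV. chi (x * \<gamma>)))"
    unfolding expsum_def by (subst sum.swap) (simp add: chi_add sum_distrib_left mult.commute)
  also have "\<dots> = (\<Sum>x\<in>UNIV. if x = (0::'a) then 2 ^ n else 0)"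
    by (rule sum.cong) (auto simp: chi_orthogonality Q_def power_0_left)
  finally show ?thesis by simp
qed

lemma expsum_moment2: "(\<Sum>\<gamma>\<in>UNIV. (expsum \<alpha> \<beta> \<gamma>)^2) = 2 ^ (2 * n)"
proof -
  have "(\<Sum>\<gamma>\<in>UNIV. (expsum \<alpha> \<beta> \<gamma>)^2)
      = 2 ^ n * (\<Sum>z\<in>rad \<alpha> \<beta>. chi (Q \<alpha> \<beta> z) * (\<Sum>\<gamma>\<in>UNIV. chi (z * \<gamma>)))"
  proof -
    have "(\<Sum>\<gamma>\<in>UNIV. (expsum \<alpha> \<beta> \<gamma>)^2)
        = 2 ^ n * (\<Sum>\<gamma>\<in>UNIV. \<Sum>z\<in>rad \<alpha> \<beta>. chi (Q \<alpha> \<beta> z) * chi (z * \<gamma>))"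
      unfolding expsum_square by (simp add: chi_add sum_distrib_left mult.commute)
    thus ?thesis by (subst (asm) sum.swap) (simp add: sum_distrib_left)
  qed
  also have "\<dots> = 2 ^ n * (\<Sum>z\<in>rad \<alpha> \<beta>. if z = 0 then 2 ^ n else 0)"
    by (intro arg_cong[where f = "(*) _"] sum.cong) (auto simp: chi_orthogonality Q_def power_0_left)
  finally show ?thesis by (simp add: sum.If_cases power_add[symmetric] mult_2)
qed

text \<open>\<open>rad\<close> is the radical of the \<open>F_(2^d)\<close>-bilinear alternating form
  \<open>(x, z) \<mapsto> Tr_d(polar x z)\<close>, so its codimension over \<open>F_(2^d)\<close> is even.\<close>
lemma card_rad_even_codim: "\<exists>j. 2 ^ n = (2 ^ d) ^ (2 * j) * card (rad \<alpha> \<beta>)"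
proof -
  define B where "B x y = rel_trace d N (polar \<alpha> \<beta> x y)" for x y
  have minus_one: "-(1::'a) = 1" using add_self[of 1] by (simp add: eq_neg_iff_add_eq_0)
  interpret form: alternating_form subfield B
  proof
    show "0 \<in> subfield" "-1 \<in> subfield" by (simp_all add: subfield_def minus_one)
    show "\<And>x y. B x y \<in> subfield" by (simp add: B_def subfield_def rel_trace_in_subfield[OF dN])
    show "\<And>x y z. B (x + y) z = B x z + B y z" by (simp add: B_def polar_add rel_trace_add)
    show "\<And>c x y. c \<in> subfield \<Longrightarrow> B (c * x) y = c * B x y"
      by (simp add: B_def polar_scale rel_trace_scale subfield_def)
    show "\<And>x y. B x y = B y x" by (simp add: B_def polar_sym)
    show "\<And>x. B x x = 0" by (simp add: B_def polar_self)
  qed (rule subfield_inverse)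
  have "form.radical UNIV = rad \<alpha> \<beta>"
  proof -
    have "B u v = rel_trace d N (v * Lin \<alpha> \<beta> u)" for u v
      unfolding B_def by (simp add: polar_sym[of \<alpha> \<beta> u v] rel_trace_polar[OF d_dvd_k dN])
    moreover have "(\<forall>v. rel_trace d N (v * Lin \<alpha> \<beta> u) = 0) \<longleftrightarrow> Lin \<alpha> \<beta> u = 0" for u
      using rel_trace_nondegenerate[OF dN d_pos] by auto
    ultimately show ?thesis by (auto simp: form.radical_def rad_def)
  qed
  moreover have "form.K_subspace UNIV" by (simp add: form.K_subspace_def)
  ultimately show ?thesis
    using form.card_radical[of UNIV] card_subfield card_field by simp
qed

text \<open>Raising \<open>L(z)\<close> to the power \<open>2^(2k)\<close> gives a \<open>2^k\<close>-polynomial of \<open>k\<close>-degree \<open>\<le> 4\<close>.\<close>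
definition Lin_coeffs :: "'a \<Rightarrow> 'a \<Rightarrow> nat \<Rightarrow> 'a" where
  "Lin_coeffs \<alpha> \<beta> i = (if i = 0 then \<alpha> else if i = 1 then \<beta> ^ (2 ^ k)
     else if i = 3 then \<beta> ^ (2 ^ (2 * k)) else if i = 4 then \<alpha> ^ (2 ^ (2 * k)) else 0)"

lemma linpoly_Lin_coeffs:
  "linpoly k (Lin_coeffs \<alpha> \<beta>) 4 z = \<alpha> * z + \<beta> ^ (2 ^ k) * z ^ (2 ^ k)
      + \<beta> ^ (2 ^ (2 * k)) * z ^ (2 ^ (3 * k)) + \<alpha> ^ (2 ^ (2 * k)) * z ^ (2 ^ (4 * k))"
  "linpoly k (Lin_coeffs \<alpha> \<beta>) 3 z = \<alpha> * z + \<beta> ^ (2 ^ k) * z ^ (2 ^ k)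
      + \<beta> ^ (2 ^ (2 * k)) * z ^ (2 ^ (3 * k))"
  by (simp_all add: linpoly_def Lin_coeffs_def eval_nat_numeral atMost_Suc mult.commute)

lemma Lin_power: "(Lin \<alpha> \<beta> z) ^ (2 ^ (2 * k)) = linpoly k (Lin_coeffs \<alpha> \<beta>) 4 z"
proof -
  have t1: "(\<alpha> * z ^ (2 ^ (2 * k))) ^ (2 ^ (2 * k)) = \<alpha> ^ (2 ^ (2 * k)) * z ^ (2 ^ (4 * k))"
    by (simp add: power_mult_distrib pow_two_pow)
  have t2: "(\<beta> * z ^ (2 ^ k)) ^ (2 ^ (2 * k)) = \<beta> ^ (2 ^ (2 * k)) * z ^ (2 ^ (3 * k))"
    by (simp add: power_mult_distrib pow_two_pow)
  have "((\<alpha> * z) ^ (2 ^ (2 * n - 2 * k))) ^ (2 ^ (2 * k)) = (\<alpha> * z) ^ (2 ^ (n * 2))"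
    using k_le by (simp add: pow_two_pow mult.commute)
  hence t3: "((\<alpha> * z) ^ (2 ^ (2 * n - 2 * k))) ^ (2 ^ (2 * k)) = \<alpha> * z"
    by (simp only: fermat_mult)
  have "((\<beta> * z) ^ (2 ^ (n - k))) ^ (2 ^ (2 * k)) = ((\<beta> * z) ^ (2 ^ n)) ^ (2 ^ k)"
    using k_le by (simp add: pow_two_pow add.commute)
  hence t4: "((\<beta> * z) ^ (2 ^ (n - k))) ^ (2 ^ (2 * k)) = \<beta> ^ (2 ^ k) * z ^ (2 ^ k)"
    by (simp add: fermat power_mult_distrib)
  show ?thesis
    unfolding Lin_def linpoly_Lin_coeffs frobenius_add t1 t2 t3 t4 by (simp add: algebra_simps)
qed

lemma rad_linpoly: "rad \<alpha> \<beta> = {z. linpoly k (Lin_coeffs \<alpha> \<beta>) 4 z = 0}"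
  unfolding rad_def Lin_power[symmetric] by simp

lemma card_rad_le: assumes "(\<alpha>, \<beta>) \<noteq> (0, 0)" shows "card (rad \<alpha> \<beta>) \<le> (2 ^ d) ^ 4"
proof -
  have bound: "card {z. linpoly k (Lin_coeffs \<alpha> \<beta>) m z = 0} \<le> (2 ^ d) ^ m"
    if "Lin_coeffs \<alpha> \<beta> m \<noteq> 0" for m
    using linpoly_roots_bound[of "Lin_coeffs \<alpha> \<beta>" m k] that by (simp add: fixed_k_iff_subfield card_subfield)
  show ?thesis
  proof (cases "\<alpha> = 0")
    case False
    thus ?thesis using bound[of 4] by (simp add: Lin_coeffs_def rad_linpoly)
  next
    case True
    hence "rad \<alpha> \<beta> = {z. linpoly k (Lin_coeffs \<alpha> \<beta>) 3 z = 0}"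
      unfolding rad_linpoly linpoly_Lin_coeffs by (simp add: power_0_left)
    hence "card (rad \<alpha> \<beta>) \<le> (2 ^ d) ^ 3"
      using True assms bound[of 3] by (simp add: Lin_coeffs_def)
    also have "\<dots> \<le> (2 ^ d) ^ 4" by (rule power_increasing) simp_all
    finally show ?thesis .
  qed
qed

lemma common_zeros_line:
  assumes z: "(z::'a) \<noteq> 0"
  shows "{y. polar 1 0 y z = 0 \<and> polar 0 1 y z = 0} = (\<lambda>t. t * z) ` subfield"
proof (intro equalityI subsetI)
  fix y assume "y \<in> {y. polar 1 0 y z = 0 \<and> polar 0 1 y z = 0}"
  hence "y ^ (2 ^ k) * z + y * z ^ (2 ^ k) = 0" by (simp add: polar_def)
  hence "y ^ (2 ^ k) * z = y * z ^ (2 ^ k)" by (metis add_left_cancel add_self)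
  hence "(y / z) ^ (2 ^ k) = y / z" using z by (simp add: power_divide field_simps)
  hence "y / z \<in> subfield" by (simp add: fixed_k_iff_subfield)
  moreover have "y = (y / z) * z" using z by simp
  ultimately show "y \<in> (\<lambda>t. t * z) ` subfield" by blast
next
  fix y assume "y \<in> (\<lambda>t. t * z) ` subfield"
  then obtain t where "t \<in> subfield" "y = t * z" by blast
  thus "y \<in> {y. polar 1 0 y z = 0 \<and> polar 0 1 y z = 0}"
    using polar_scale[of t] polar_self by simp
qed

lemma card_common_zeros:
  assumes z: "(z::'a) \<noteq> 0"
  shows "card {y. polar 1 0 y z = 0 \<and> polar 0 1 y z = 0} = 2 ^ d"
proof -
  have "inj_on (\<lambda>t. t * z) subfield" using z by (auto intro: inj_onI)
  thus ?thesis unfolding common_zeros_line[OF z] by (simp add: card_image card_subfield)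
qed

lemma count_pairs_with_radical_element:
  assumes z: "(z::'a) \<noteq> 0"
  shows "(\<Sum>\<alpha>\<in>UNIV. \<Sum>\<beta>\<in>UNIV. if Lin \<alpha> \<beta> z = 0 then 1 else 0 :: int) = 2 ^ (n + d)"
proof -
  define A where "A y = polar 1 0 y z" for y
  define B where "B y = polar 0 1 y z" for y
  have chi_split: "chi (Lin \<alpha> \<beta> z * y) = chi (A y * \<alpha>) * chi (B y * \<beta>)" for y \<alpha> \<beta>
  proof -
    have "polar \<alpha> \<beta> y z = A y * \<alpha> + B y * \<beta>" by (simp add: polar_def A_def B_def algebra_simps)
    thus ?thesis by (simp flip: chi_polar add: chi_add mult.commute)
  qed
  have "2 ^ n * (if Lin \<alpha> \<beta> z = 0 then 1 else 0 :: int) = (\<Sum>y\<in>UNIV. chi (Lin \<alpha> \<beta> z * y))" for \<alpha> \<beta>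
    by (simp add: chi_orthogonality)
  hence "2 ^ n * (\<Sum>\<alpha>\<in>UNIV. \<Sum>\<beta>\<in>UNIV. if Lin \<alpha> \<beta> z = 0 then 1 else 0 :: int)
      = (\<Sum>\<alpha>\<in>UNIV. \<Sum>\<beta>\<in>UNIV. \<Sum>y\<in>UNIV. chi (Lin \<alpha> \<beta> z * y))"
    by (simp add: sum_distrib_left)
  also have "\<dots> = (\<Sum>y\<in>UNIV. \<Sum>\<alpha>\<in>UNIV. \<Sum>\<beta>\<in>UNIV. chi (Lin \<alpha> \<beta> z * y))"
    by (rule sum_swap3)
  also have "\<dots> = (\<Sum>y\<in>UNIV. \<Sum>\<alpha>\<in>UNIV. \<Sum>\<beta>\<in>UNIV. chi (A y * \<alpha>) * chi (B y * \<beta>))"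
    by (simp only: chi_split)
  also have "\<dots> = (\<Sum>y\<in>UNIV. (\<Sum>\<alpha>\<in>UNIV. chi (A y * \<alpha>)) * (\<Sum>\<beta>\<in>UNIV. chi (B y * \<beta>)))"
    by (simp add: sum_product)
  also have "\<dots> = (\<Sum>y\<in>UNIV. if A y = 0 \<and> B y = 0 then 2 ^ (2 * n) else 0)"
    by (rule sum.cong) (auto simp: chi_orthogonality power_add[symmetric] mult_2)
  also have "\<dots> = 2 ^ (2 * n) * 2 ^ d"
    using card_common_zeros[OF z] by (simp add: sum.If_cases A_def B_def)
  finally show ?thesis by (simp add: power_add mult_2)
qed

lemma rad_moment:
  "(\<Sum>\<alpha>\<in>UNIV. \<Sum>\<beta>\<in>UNIV. int (card (rad \<alpha> \<beta>))) = 2 ^ (2 * n) + (2 ^ n - 1) * 2 ^ (n + d)"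
proof -
  have "(\<Sum>\<alpha>\<in>UNIV. \<Sum>\<beta>\<in>UNIV. int (card (rad \<alpha> \<beta>)))
      = (\<Sum>\<alpha>\<in>UNIV. \<Sum>\<beta>\<in>UNIV. \<Sum>z\<in>UNIV. if Lin \<alpha> \<beta> z = 0 then 1 else 0 :: int)"
    by (simp add: rad_def sum.If_cases)
  also have "\<dots> = (\<Sum>z\<in>UNIV. \<Sum>\<alpha>\<in>UNIV. \<Sum>\<beta>\<in>UNIV. if Lin \<alpha> \<beta> z = 0 then 1 else 0 :: int)"
    by (rule sum_swap3)
  also have "\<dots> = (\<Sum>z\<in>UNIV. if z = (0::'a) then 2 ^ (2 * n) else 2 ^ (n + d))"
  proof (rule sum.cong[OF refl])
    fix z :: 'a
    show "(\<Sum>\<alpha>\<in>UNIV. \<Sum>\<beta>\<in>UNIV. if Lin \<alpha> \<beta> z = 0 then 1 else 0 :: int)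
        = (if z = 0 then 2 ^ (2 * n) else 2 ^ (n + d))"
      using count_pairs_with_radical_element[of z] card_field by (simp add: power_add[symmetric] mult_2)
  qed
  also have "\<dots> = 2 ^ (2 * n) + int (card (UNIV - {0::'a})) * 2 ^ (n + d)"
    by (simp add: sum.If_cases Diff_eq[symmetric])
  finally show ?thesis using card_nonzero by (simp add: of_nat_diff)
qed

text \<open>Codeword coordinates are the values \<open>Tr(Q(x) + \<gamma> x)\<close> at \<open>x = p^i\<close>; as \<open>i\<close> runs through
  \<open>0 .. 2^n - 2\<close>, \<open>x\<close> runs through the nonzero field elements.\<close>
lemma weight_trace_count:
  "cw_weight n k p \<alpha> \<beta> \<gamma> = card {x. Tr (Q \<alpha> \<beta> x + \<gamma> * x) \<noteq> 0}"
proof -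
  define I where "I = {i. i < 2 ^ n - 1 \<and> cw n k p \<alpha> \<beta> \<gamma> i \<noteq> 0}"
  have cw: "cw n k p \<alpha> \<beta> \<gamma> i = Tr (Q \<alpha> \<beta> (p ^ i) + \<gamma> * p ^ i)" for i
    by (simp only: cw_def Q_def power_mult[of p i])
  have "(\<lambda>i. p ^ i) ` I = {x. Tr (Q \<alpha> \<beta> x + \<gamma> * x) \<noteq> 0}"
  proof (intro equalityI subsetI)
    fix x assume x: "x \<in> {x. Tr (Q \<alpha> \<beta> x + \<gamma> * x) \<noteq> 0}"
    hence "x \<noteq> 0" by (auto simp: Q_def tr_def power_0_left)
    then obtain i where "i < 2 ^ n - 1" "x = p ^ i"
      using bij_betw_imp_surj_on[OF p_powers_bij] by blast
    thus "x \<in> (\<lambda>i. p ^ i) ` I" using x by (auto simp: I_def cw)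
  qed (auto simp: I_def cw)
  moreover have "inj_on (\<lambda>i. p ^ i) I"
    by (rule inj_on_subset[OF bij_betw_imp_inj_on[OF p_powers_bij]]) (auto simp: I_def)
  ultimately show ?thesis unfolding cw_weight_def I_def[symmetric] by (metis card_image)
qed

text \<open>Hence \<open>wt = 2^(n-1) - S/2\<close>, since \<open>S = 2^n - 2 |{x. Tr(Q(x) + \<gamma> x) = 1}|\<close>.\<close>
lemma weight_expsum: "int (cw_weight n k p \<alpha> \<beta> \<gamma>) = 2 ^ (n - 1) - expsum \<alpha> \<beta> \<gamma> div 2"
proof -
  define c where "c = card {x. Tr (Q \<alpha> \<beta> x + \<gamma> * x) \<noteq> 0}"
  have "expsum \<alpha> \<beta> \<gamma> = (\<Sum>x\<in>UNIV. 1 - 2 * of_bool (Tr (Q \<alpha> \<beta> x + \<gamma> * x) \<noteq> 0) :: int)"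
    unfolding expsum_def by (rule sum.cong) (simp_all add: chi_def sgn2_def)
  also have "\<dots> = 2 ^ n - 2 * int c"
    using card_field by (simp add: sum_subtractf c_def sum_distrib_left)
  finally have "expsum \<alpha> \<beta> \<gamma> = 2 * (2 ^ (n - 1) - int c)"
    using power_pred[OF n_pos, of "2::int"] by simp
  thus ?thesis by (simp add: weight_trace_count c_def)
qed

end

locale main_setting = quadratic_setting n k d p for n k d and p :: "'a::{field,finite}" +
  assumes odd_N: "odd (n div d)" and k_not_third: "3 * k \<noteq> n" "3 * k \<noteq> 2 * n"
begin

text \<open>\<open>N = n/d\<close> is odd and \<open>N \<notin> {1, 3}\<close>: \<open>N = 1\<close> would force \<open>d = n > k\<close>, and \<open>N = 3\<close>
  would force \<open>k \<in> {n/3, 2n/3}\<close>.\<close>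
lemma N_ge5: "N \<ge> 5"
proof -
  obtain t where t: "k = d * t" using d_dvd_k by blast
  have "d * t < d * N" using t k_le dN n_pos by simp
  hence "t < N" by simp
  moreover have "t \<noteq> 0" using t k_ge by auto
  moreover have "N = 3 \<longrightarrow> t \<noteq> 1 \<and> t \<noteq> 2" using t k_not_third dN by auto
  ultimately have "N \<noteq> 1" "N \<noteq> 3" by auto
  moreover obtain m where "N = 2 * m + 1" using odd_N by (rule oddE)
  ultimately show ?thesis by simp
qed

text \<open>For \<open>(\<alpha>, \<beta>) \<noteq> (0, 0)\<close> the radical has \<open>F_(2^d)\<close>-dimension 1 or 3: its codimension is
  even, \<open>N\<close> is odd and the dimension is at most 4.\<close>
lemma card_rad_cases:
  assumes "(\<alpha>, \<beta>) \<noteq> (0, 0)"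
  shows "card (rad \<alpha> \<beta>) = 2 ^ d \<or> card (rad \<alpha> \<beta>) = 2 ^ (3 * d)"
proof -
  obtain j where j: "2 ^ n = (2 ^ d) ^ (2 * j) * card (rad \<alpha> \<beta>)" using card_rad_even_codim by blast
  have "card (rad \<alpha> \<beta>) > 0" using zero_in_rad[of \<alpha> \<beta>] by (metis card_gt_0_iff empty_iff finite)
  hence "(2::nat) ^ (d * (2 * j)) \<le> 2 ^ (d * N)" using j dN by (simp add: power_mult)
  hence le: "2 * j \<le> N" using d_pos by simp
  have "(2::nat) ^ (d * N) = 2 ^ (d * (2 * j)) * 2 ^ (d * (N - 2 * j))"
    using le by (simp flip: power_add add: diff_mult_distrib2)
  with j dN have card_rad: "card (rad \<alpha> \<beta>) = 2 ^ (d * (N - 2 * j))" by (simp add: power_mult)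
  hence "(2::nat) ^ (d * (N - 2 * j)) \<le> 2 ^ (d * 4)"
    using card_rad_le[OF assms] by (simp add: power_mult)
  hence "N - 2 * j \<le> 4" using d_pos by simp
  moreover have "odd (N - 2 * j)" using odd_N le by simp
  ultimately have "N - 2 * j = 1 \<or> N - 2 * j = 3" by (rule odd_le_4[rotated])
  thus ?thesis using card_rad by (auto simp: mult.commute)
qed

lemma expsum_distribution:
  assumes rad: "card (rad \<alpha> \<beta>) = 2 ^ w" and nw: "n = w + 2 * h" and h: "h \<ge> 1"
  shows "expsum \<alpha> \<beta> \<gamma> \<in> {0, 2 ^ (w + h), - (2 ^ (w + h))}"
    and "int (card {\<gamma>. expsum \<alpha> \<beta> \<gamma> = 2 ^ (w + h)}) = 2 ^ (2 * h - 1) + 2 ^ (h - 1)"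
    and "int (card {\<gamma>. expsum \<alpha> \<beta> \<gamma> = - (2 ^ (w + h))}) = 2 ^ (2 * h - 1) - 2 ^ (h - 1)"
    and "int (card {\<gamma>. expsum \<alpha> \<beta> \<gamma> = 0}) = 2 ^ n - 2 ^ (2 * h)"
proof -
  define v :: int where "v = 2 ^ (w + h)"
  have n_split: "(2::int) ^ n = 2 ^ (w + h) * 2 ^ h"
    by (simp add: nw mult_2 flip: power_add)
  have v2: "2 ^ n * int (card (rad \<alpha> \<beta>)) = v ^ 2"
    unfolding rad n_split v_def by (simp add: power2_eq_square algebra_simps flip: power_add)
  have vals: "expsum \<alpha> \<beta> \<gamma> \<in> {0, v, -v}" for \<gamma>
    using expsum_square_cases[of \<alpha> \<beta> \<gamma>] unfolding v2 by (auto simp: power2_eq_iff)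
  thus "expsum \<alpha> \<beta> \<gamma> \<in> {0, 2 ^ (w + h), - (2 ^ (w + h))}" by (simp add: v_def)
  have m1: "(\<Sum>\<gamma>\<in>UNIV. expsum \<alpha> \<beta> \<gamma>) = v * 2 ^ h"
    by (simp only: expsum_moment1 n_split v_def)
  have m2: "(\<Sum>\<gamma>\<in>UNIV. (expsum \<alpha> \<beta> \<gamma>)^2) = v ^ 2 * 2 ^ (2 * h)"
  proof -
    have "(2::int) ^ (2 * n) = (2 ^ n) ^ 2" by (simp flip: power_mult add: mult.commute)
    also have "\<dots> = v ^ 2 * 2 ^ (2 * h)"
      unfolding n_split v_def by (simp add: power_mult_distrib flip: power_mult add: mult.commute)
    finally show ?thesis by (simp add: expsum_moment2)
  qed
  have "\<forall>\<gamma>\<in>UNIV. expsum \<alpha> \<beta> \<gamma> \<in> {0, v, -v}" "v > 0" using vals by (simp_all add: v_def)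
  note dist = three_value_distribution[OF finite_class.finite_UNIV this m1 m2]
  have h_split: "(2::int) ^ (2 * h) = 2 * 2 ^ (2 * h - 1)" "(2::int) ^ h = 2 * 2 ^ (h - 1)"
    using h by (simp_all add: power_pred)
  show "int (card {\<gamma>. expsum \<alpha> \<beta> \<gamma> = 2 ^ (w + h)}) = 2 ^ (2 * h - 1) + 2 ^ (h - 1)"
    using dist(1) h_split by (simp add: v_def)
  show "int (card {\<gamma>. expsum \<alpha> \<beta> \<gamma> = - (2 ^ (w + h))}) = 2 ^ (2 * h - 1) - 2 ^ (h - 1)"
    using dist(2) h_split by (simp add: v_def)
  show "int (card {\<gamma>. expsum \<alpha> \<beta> \<gamma> = 0}) = 2 ^ n - 2 ^ (2 * h)"
    using dist(3) card_field by simp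
qed

definition pairs1 :: "('a \<times> 'a) set" where
  "pairs1 = {(\<alpha>, \<beta>). (\<alpha>, \<beta>) \<noteq> (0, 0) \<and> card (rad \<alpha> \<beta>) = 2 ^ d}"

definition pairs3 :: "('a \<times> 'a) set" where
  "pairs3 = {(\<alpha>, \<beta>). (\<alpha>, \<beta>) \<noteq> (0, 0) \<and> card (rad \<alpha> \<beta>) = 2 ^ (3 * d)}"

lemma sum_over_pairs:
  fixes f :: "'a \<times> 'a \<Rightarrow> int"
  shows "(\<Sum>ab\<in>UNIV. f ab) = f (0, 0) + (\<Sum>ab\<in>pairs1. f ab) + (\<Sum>ab\<in>pairs3. f ab)"
proof -
  have U: "UNIV = insert (0, 0) (pairs1 \<union> pairs3)"
    using card_rad_cases by (auto simp: pairs1_def pairs3_def)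
  have disjoint: "pairs1 \<inter> pairs3 = {}" "(0, 0) \<notin> pairs1 \<union> pairs3"
    using d_pos by (auto simp: pairs1_def pairs3_def)
  have "(\<Sum>ab\<in>UNIV. f ab) = f (0, 0) + (\<Sum>ab\<in>pairs1 \<union> pairs3. f ab)"
    unfolding U by (rule sum.insert) (use disjoint(2) in auto)
  also have "(\<Sum>ab\<in>pairs1 \<union> pairs3. f ab) = (\<Sum>ab\<in>pairs1. f ab) + (\<Sum>ab\<in>pairs3. f ab)"
    by (rule sum.union_disjoint) (simp_all add: disjoint(1))
  finally show ?thesis by simp
qed

lemma sum_pairs_const:
  fixes f :: "'a \<times> 'a \<Rightarrow> int"
  assumes "\<And>ab. ab \<in> pairs1 \<Longrightarrow> f ab = c1" "\<And>ab. ab \<in> pairs3 \<Longrightarrow> f ab = c3"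
  shows "(\<Sum>ab\<in>UNIV. f ab) = f (0, 0) + int (card pairs1) * c1 + int (card pairs3) * c3"
  using assms by (simp add: sum_over_pairs)

text \<open>The class sizes: a linear system from counting all pairs and from the radical moment.\<close>
lemma card_pairs_equations:
  "int (card pairs1) + int (card pairs3) = 2 ^ (2 * n) - 1"
  "2 ^ n + int (card pairs1) * 2 ^ d + int (card pairs3) * 2 ^ (3 * d) = 2 ^ (2 * n) + (2 ^ n - 1) * 2 ^ (n + d)"
proof -
  have "(\<Sum>ab\<in>(UNIV :: ('a \<times> 'a) set). 1::int) = 2 ^ (2 * n)"
    using card_field by (simp add: card_prod power_add[symmetric] mult_2 flip: UNIV_Times_UNIV)
  thus "int (card pairs1) + int (card pairs3) = 2 ^ (2 * n) - 1"
    using sum_pairs_const[of "\<lambda>_. 1" 1 1] by simp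
  have "rad 0 0 = UNIV" by (simp add: rad_def Lin_def power_0_left)
  hence "(\<Sum>(\<alpha>, \<beta>)\<in>UNIV. int (card (rad \<alpha> \<beta>)))
      = 2 ^ n + int (card pairs1) * 2 ^ d + int (card pairs3) * 2 ^ (3 * d)"
    using card_field by (subst sum_pairs_const[of _ "2 ^ d" "2 ^ (3 * d)"]) (auto simp: pairs1_def pairs3_def)
  thus "2 ^ n + int (card pairs1) * 2 ^ d + int (card pairs3) * 2 ^ (3 * d) = 2 ^ (2 * n) + (2 ^ n - 1) * 2 ^ (n + d)"
    using rad_moment by (simp add: sum_prod_UNIV case_prod_beta)
qed

lemma card_pairs:
  defines "q \<equiv> (2::real) ^ n" and "s \<equiv> (2::real) ^ d"
  shows "real (card pairs3) = (q - 1) * (q / s - 1) / (s ^ 2 - 1)"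
    and "real (card pairs1) = (q - 1) * (q * s ^ 2 - q - q / s + s ^ 2) / (s ^ 2 - 1)"
proof -
  have "(2::real) ^ 1 \<le> s" using d_pos unfolding s_def by (intro power_increasing) auto
  hence s: "s ^ 2 - 1 \<noteq> 0" "s \<noteq> 0" by (auto simp: power2_eq_square) (smt (verit) mult_le_cancel_left1)
  have R1: "real (card pairs1) + real (card pairs3) = q ^ 2 - 1"
    using arg_cong[OF card_pairs_equations(1), of real_of_int] by (simp add: q_def power_mult mult.commute)
  have R2: "q + real (card pairs1) * s + real (card pairs3) * s ^ 3 = q ^ 2 + (q - 1) * q * s"
    using arg_cong[OF card_pairs_equations(2), of real_of_int]
    by (simp add: q_def s_def power_mult power_add mult.commute)
  have "real (card pairs3) * (s * (s ^ 2 - 1))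
      = (q ^ 2 + (q - 1) * q * s - q) - (real (card pairs1) + real (card pairs3)) * s"
    using R2 by (simp add: algebra_simps power2_eq_square power3_eq_cube)
  also have "\<dots> = (q - 1) * (q - s)" unfolding R1 by (simp add: algebra_simps power2_eq_square)
  finally have "real (card pairs3) * (s * (s ^ 2 - 1)) = (q - 1) * (q - s)" .
  thus P3: "real (card pairs3) = (q - 1) * (q / s - 1) / (s ^ 2 - 1)"
    using s by (simp add: field_simps)
  show "real (card pairs1) = (q - 1) * (q * s ^ 2 - q - q / s + s ^ 2) / (s ^ 2 - 1)"
    using R1 P3 s by (simp add: field_simps) (simp add: algebra_simps power2_eq_square)
qed

text \<open>Half-codimensions: \<open>n = d + 2 h1 = 3d + 2 h3\<close> (possible as \<open>N\<close> is odd and \<open>N \<ge> 5\<close>).\<close>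
definition h1 :: nat where "h1 = (n - d) div 2"
definition h3 :: nat where "h3 = (n - 3 * d) div 2"

lemma h_facts:
  "n = d + 2 * h1" "n = 3 * d + 2 * h3" "h1 \<ge> 1" "h3 \<ge> 1"
  "(n + d) div 2 = d + h1" "(n + 3 * d) div 2 = 3 * d + h3"
proof -
  obtain m where m: "N = 2 * m + 1" using odd_N by (rule oddE)
  hence m2: "m \<ge> 2" using N_ge5 by simp
  have n: "n = d * (2 * m + 1)" using dN m by simp
  have "n - d = 2 * (d * m)" "n - 3 * d = 2 * (d * (m - 1))"
    using n m2 by (simp_all add: algebra_simps diff_mult_distrib2)
  hence h1: "h1 = d * m" and h3: "h3 = d * (m - 1)" by (simp_all add: h1_def h3_def)
  show "n = d + 2 * h1" "(n + d) div 2 = d + h1" using n h1 by (simp_all add: algebra_simps)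
  show "n = 3 * d + 2 * h3" "(n + 3 * d) div 2 = 3 * d + h3"
    using n h3 m2 by (simp_all add: algebra_simps diff_mult_distrib2)
  show "h1 \<ge> 1" "h3 \<ge> 1" using h1 h3 d_pos m2 by simp_all
qed

definition value_count :: "nat \<Rightarrow> nat \<Rightarrow> int \<Rightarrow> int" where
  "value_count w h u =
     (if u = 2 ^ (w + h) then 2 ^ (2 * h - 1) + 2 ^ (h - 1)
      else if u = - (2 ^ (w + h)) then 2 ^ (2 * h - 1) - 2 ^ (h - 1)
      else if u = 0 then 2 ^ n - 2 ^ (2 * h) else 0)"

lemma card_expsum_level:
  assumes "card (rad \<alpha> \<beta>) = 2 ^ w" "n = w + 2 * h" "h \<ge> 1"
  shows "int (card {\<gamma>. expsum \<alpha> \<beta> \<gamma> = u}) = value_count w h u"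
proof -
  have "(2::int) ^ (w + h) \<noteq> 0" "(2::int) ^ (w + h) \<noteq> - (2 ^ (w + h))" by simp_all
  moreover have "{\<gamma>. expsum \<alpha> \<beta> \<gamma> = u} = {}" if "u \<notin> {0, 2 ^ (w + h), - (2 ^ (w + h))}"
    using expsum_distribution(1)[OF assms] that by auto
  ultimately show ?thesis
    unfolding value_count_def using expsum_distribution(2-4)[OF assms] by auto
qed

abbreviation S3 :: "'a \<times> 'a \<times> 'a \<Rightarrow> int" where
  "S3 t \<equiv> expsum (fst t) (fst (snd t)) (snd (snd t))"

lemma card_S3_level:
  "int (card {t. S3 t = u})
   = (if u = 2 ^ n then 1 else 0) + (if u = 0 then 2 ^ n - 1 else 0)
     + int (card pairs1) * value_count d h1 u + int (card pairs3) * value_count (3 * d) h3 u"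
proof -
  have "int (card {t. S3 t = u}) = (\<Sum>t\<in>UNIV. of_bool (S3 t = u) :: int)"
    by simp
  also have "\<dots> = (\<Sum>\<alpha>\<in>UNIV. \<Sum>\<beta>\<gamma>\<in>UNIV. of_bool (expsum \<alpha> (fst \<beta>\<gamma>) (snd \<beta>\<gamma>) = u) :: int)"
    using sum_prod_UNIV[of "\<lambda>\<alpha> \<beta>\<gamma>. of_bool (expsum \<alpha> (fst \<beta>\<gamma>) (snd \<beta>\<gamma>) = u)"]
    by (simp del: sum_of_bool_eq)
  also have "\<dots> = (\<Sum>\<alpha>\<in>UNIV. \<Sum>\<beta>\<in>UNIV. \<Sum>\<gamma>\<in>UNIV. of_bool (expsum \<alpha> \<beta> \<gamma> = u) :: int)"
    by (rule sum.cong[OF refl], subst sum_prod_UNIV) (rule refl)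
  also have "\<dots> = (\<Sum>\<alpha>\<in>UNIV. \<Sum>\<beta>\<in>UNIV. int (card {\<gamma>. expsum \<alpha> \<beta> \<gamma> = u}))"
    by simp
  also have "\<dots> = (\<Sum>ab\<in>UNIV. int (card {\<gamma>. expsum (fst ab) (snd ab) \<gamma> = u}))"
    by (rule sum_prod_UNIV)
  also have "\<dots> = int (card {\<gamma>. expsum 0 0 \<gamma> = u})
      + int (card pairs1) * value_count d h1 u + int (card pairs3) * value_count (3 * d) h3 u"
  proof -
    define f where "f ab = int (card {\<gamma>. expsum (fst ab) (snd ab) \<gamma> = u})" for ab :: "'a \<times> 'a"
    have "(\<Sum>ab\<in>UNIV. f ab) = f (0, 0) + int (card pairs1) * value_count d h1 u
        + int (card pairs3) * value_count (3 * d) h3 u"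
      by (rule sum_pairs_const)
         (use h_facts in \<open>auto simp: f_def pairs1_def pairs3_def intro!: card_expsum_level\<close>)
    thus ?thesis by (simp add: f_def)
  qed
  also have "int (card {\<gamma>. expsum 0 0 \<gamma> = u}) = (if u = 2 ^ n then 1 else 0) + (if u = 0 then 2 ^ n - 1 else 0)"
  proof -
    have "expsum 0 0 \<gamma> = (if \<gamma> = 0 then 2 ^ n else 0)" for \<gamma>
      using chi_orthogonality[of \<gamma>] by (simp add: expsum_def Q_def power_0_left)
    hence "{\<gamma>. expsum 0 0 \<gamma> = u} = (if u = 2 ^ n then {0} else {}) \<union> (if u = 0 then UNIV - {0} else {})"
      by auto
    thus ?thesis using card_nonzero by (auto simp: of_nat_diff)
  qed
  finally show ?thesis .
qed

lemma S3_values: "S3 t \<in> {2 ^ (d + h1), - (2 ^ (d + h1)), 2 ^ (3 * d + h3), - (2 ^ (3 * d + h3)), 0, 2 ^ n}"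
proof -
  obtain \<alpha> \<beta> \<gamma> where t: "t = (\<alpha>, \<beta>, \<gamma>)" by (cases t) auto
  consider "(\<alpha>, \<beta>) = (0, 0)" | "(\<alpha>, \<beta>) \<in> pairs1" | "(\<alpha>, \<beta>) \<in> pairs3"
    using card_rad_cases[of \<alpha> \<beta>] by (auto simp: pairs1_def pairs3_def)
  thus ?thesis
  proof cases
    case 1
    thus ?thesis using chi_orthogonality[of \<gamma>] by (simp add: t expsum_def Q_def power_0_left)
  next
    case 2
    thus ?thesis using expsum_distribution(1)[of \<alpha> \<beta> d h1] h_facts by (auto simp: t pairs1_def)
  next
    case 3
    thus ?thesis using expsum_distribution(1)[of \<alpha> \<beta> "3 * d" h3] h_facts by (auto simp: t pairs3_def)
  qed
qed

text \<open>The exponents of the six values are strictly ordered, so the values are distinct.\<close>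
lemma exponents_ordered: "d + h1 < 3 * d + h3" "3 * d + h3 < n"
  using h_facts d_pos by linarith+

lemma card_S3_values:
  "int (card {t. S3 t = 2 ^ (d + h1)}) = int (card pairs1) * (2 ^ (2 * h1 - 1) + 2 ^ (h1 - 1))"
  "int (card {t. S3 t = - (2 ^ (d + h1))}) = int (card pairs1) * (2 ^ (2 * h1 - 1) - 2 ^ (h1 - 1))"
  "int (card {t. S3 t = 2 ^ (3 * d + h3)}) = int (card pairs3) * (2 ^ (2 * h3 - 1) + 2 ^ (h3 - 1))"
  "int (card {t. S3 t = - (2 ^ (3 * d + h3))}) = int (card pairs3) * (2 ^ (2 * h3 - 1) - 2 ^ (h3 - 1))"
  "int (card {t. S3 t = 0}) = (2 ^ n - 1) + int (card pairs1) * (2 ^ n - 2 ^ (2 * h1))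
      + int (card pairs3) * (2 ^ n - 2 ^ (2 * h3))"
  "card {t. S3 t = 2 ^ n} = 1"
  using card_S3_level[of "2 ^ (d + h1)"] card_S3_level[of "- (2 ^ (d + h1))"]
    card_S3_level[of "2 ^ (3 * d + h3)"] card_S3_level[of "- (2 ^ (3 * d + h3))"]
    card_S3_level[of 0] card_S3_level[of "2 ^ n"] exponents_ordered
  by (simp_all add: value_count_def pow2_neq_neg)

lemma closed_form_exponents:
  "n - d - 1 = 2 * h1 - 1" "(n - d - 2) div 2 = h1 - 1"
  "n - 3 * d - 1 = 2 * h3 - 1" "(n - 3 * d - 2) div 2 = h3 - 1"
  "(2::real) ^ (n + 2 * d) = 2 ^ n * (2 ^ d) ^ 2" "(2::real) ^ (n - d) = 2 ^ n / 2 ^ d"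
  "(2::real) ^ (2 * d) = (2 ^ d) ^ 2" "(2::real) ^ (2 * n) = (2 ^ n) ^ 2"
  "(2::real) ^ (2 * n - d) = (2 ^ n) ^ 2 / 2 ^ d"
  "(2::real) ^ (2 * n - 4 * d) = (2 ^ n) ^ 2 / (2 ^ d) ^ 4"
  "(2::real) ^ (n - 3 * d) = 2 ^ n / (2 ^ d) ^ 3"
  "(2::real) ^ (2 * h1) = 2 ^ n / 2 ^ d" "(2::real) ^ (2 * h3) = 2 ^ n / (2 ^ d) ^ 3"
proof -
  note hf = h_facts
  show "n - d - 1 = 2 * h1 - 1" "(n - d - 2) div 2 = h1 - 1"
    "n - 3 * d - 1 = 2 * h3 - 1" "(n - 3 * d - 2) div 2 = h3 - 1" using hf by simp_all
  show "(2::real) ^ (n + 2 * d) = 2 ^ n * (2 ^ d) ^ 2" "(2::real) ^ (n - d) = 2 ^ n / 2 ^ d"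
    "(2::real) ^ (2 * d) = (2 ^ d) ^ 2" "(2::real) ^ (2 * n) = (2 ^ n) ^ 2"
    "(2::real) ^ (2 * n - d) = (2 ^ n) ^ 2 / 2 ^ d"
    "(2::real) ^ (2 * n - 4 * d) = (2 ^ n) ^ 2 / (2 ^ d) ^ 4"
    "(2::real) ^ (n - 3 * d) = 2 ^ n / (2 ^ d) ^ 3"
    using hf by (simp_all add: power_add power_diff flip: power_mult, simp_all add: mult.commute)
  show "(2::real) ^ (2 * h1) = 2 ^ n / 2 ^ d" "(2::real) ^ (2 * h3) = 2 ^ n / (2 ^ d) ^ 3"
    by (subst (2) hf(1), simp add: power_add) (subst (2) hf(2), simp add: power_add mult.commute flip: power_mult)
qed

lemma real_card_S3:
  "real (card {t. S3 t = 2 ^ ((n + d) div 2)})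
     = (2 ^ (n - d - 1) + 2 ^ ((n - d - 2) div 2)) * (2 ^ n - 1)
       * (2 ^ (n + 2*d) - 2 ^ n - 2 ^ (n - d) + 2 ^ (2*d)) / (2 ^ (2*d) - 1)"
  "real (card {t. S3 t = - (2 ^ ((n + d) div 2))})
     = (2 ^ (n - d - 1) - 2 ^ ((n - d - 2) div 2)) * (2 ^ n - 1)
       * (2 ^ (n + 2*d) - 2 ^ n - 2 ^ (n - d) + 2 ^ (2*d)) / (2 ^ (2*d) - 1)"
  "real (card {t. S3 t = 2 ^ ((n + 3*d) div 2)})
     = (2 ^ (n - 3*d - 1) + 2 ^ ((n - 3*d - 2) div 2)) * (2 ^ (n - d) - 1)
       * (2 ^ n - 1) / (2 ^ (2*d) - 1)"
  "real (card {t. S3 t = - (2 ^ ((n + 3*d) div 2))})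
     = (2 ^ (n - 3*d - 1) - 2 ^ ((n - 3*d - 2) div 2)) * (2 ^ (n - d) - 1)
       * (2 ^ n - 1) / (2 ^ (2*d) - 1)"
  "real (card {t. S3 t = 0})
     = (2 ^ n - 1) * (2 ^ (2*n) - 2 ^ (2*n - d) + 2 ^ (2*n - 4*d) + 2 ^ n
                       - 2 ^ (n - d) - 2 ^ (n - 3*d) + 1)"
proof -
  define q s where "q = (2::real) ^ n" and "s = (2::real) ^ d"
  have "(2::real) ^ 1 \<le> s" using d_pos unfolding s_def by (intro power_increasing) auto
  hence s: "s ^ 2 - 1 \<noteq> 0" "s \<noteq> 0" by (auto simp: power2_eq_square) (smt (verit) mult_le_cancel_left1)
  note hf = h_facts
  note exps = closed_form_exponents(1-4)
  note pows = closed_form_exponents(5-11)[folded q_def s_def]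
  note pows_h = closed_form_exponents(12,13)[folded q_def s_def]
  note counts = card_S3_values(1-5)[THEN arg_cong[where f = real_of_int], simplified]
  show "real (card {t. S3 t = 2 ^ ((n + d) div 2)}) = (2 ^ (n - d - 1) + 2 ^ ((n - d - 2) div 2)) * (2 ^ n - 1)
       * (2 ^ (n + 2*d) - 2 ^ n - 2 ^ (n - d) + 2 ^ (2*d)) / (2 ^ (2*d) - 1)"
    using counts(1) card_pairs(2) s unfolding exps pows hf(5) q_def[symmetric] s_def[symmetric]
    by (simp add: field_simps)
  show "real (card {t. S3 t = - (2 ^ ((n + d) div 2))}) = (2 ^ (n - d - 1) - 2 ^ ((n - d - 2) div 2)) * (2 ^ n - 1)
       * (2 ^ (n + 2*d) - 2 ^ n - 2 ^ (n - d) + 2 ^ (2*d)) / (2 ^ (2*d) - 1)"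
    using counts(2) card_pairs(2) s unfolding exps pows hf(5) q_def[symmetric] s_def[symmetric]
    by (simp add: field_simps)
  show "real (card {t. S3 t = 2 ^ ((n + 3*d) div 2)}) = (2 ^ (n - 3*d - 1) + 2 ^ ((n - 3*d - 2) div 2))
       * (2 ^ (n - d) - 1) * (2 ^ n - 1) / (2 ^ (2*d) - 1)"
    using counts(3) card_pairs(1) s unfolding exps pows hf(6) q_def[symmetric] s_def[symmetric]
    by (simp add: field_simps)
  show "real (card {t. S3 t = - (2 ^ ((n + 3*d) div 2))}) = (2 ^ (n - 3*d - 1) - 2 ^ ((n - 3*d - 2) div 2))
       * (2 ^ (n - d) - 1) * (2 ^ n - 1) / (2 ^ (2*d) - 1)"
    using counts(4) card_pairs(1) s unfolding exps pows hf(6) q_def[symmetric] s_def[symmetric]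
    by (simp add: field_simps)
  show "real (card {t. S3 t = 0}) = (2 ^ n - 1) * (2 ^ (2*n) - 2 ^ (2*n - d) + 2 ^ (2*n - 4*d) + 2 ^ n
       - 2 ^ (n - d) - 2 ^ (n - 3*d) + 1)"
  proof -
    have "real (card {t. S3 t = 0})
        = (q - 1) + real (card pairs1) * (q - q / s) + real (card pairs3) * (q - q / s ^ 3)"
      using counts(5) unfolding pows_h q_def by simp
    also have "\<dots> = (q - 1) * (q ^ 2 - q ^ 2 / s + q ^ 2 / s ^ 4 + q - q / s - q / s ^ 3 + 1)"
      unfolding card_pairs q_def[symmetric] s_def[symmetric] by (rule zero_count_identity[OF s])
    finally show ?thesis unfolding pows q_def by simp
  qed
qed

abbreviation W3 :: "'a \<times> 'a \<times> 'a \<Rightarrow> nat" where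
  "W3 t \<equiv> cw_weight n k p (fst t) (fst (snd t)) (snd (snd t))"

text \<open>All values of \<open>S\<close> are even, so the weight determines \<open>S\<close>.\<close>
lemma weight_level_set: "{t. W3 t = X} = {t. S3 t = 2 ^ n - 2 * int X}"
proof -
  have "W3 t = X \<longleftrightarrow> S3 t = 2 ^ n - 2 * int X" for t
  proof -
    have "even (S3 t)" using S3_values[of t] h_facts n_pos by auto
    hence even: "S3 t = 2 * (S3 t div 2)" by simp
    have "W3 t = X \<longleftrightarrow> 2 ^ (n - 1) - S3 t div 2 = int X"
      using weight_expsum[of "fst t" "fst (snd t)" "snd (snd t)"] by auto
    also have "\<dots> \<longleftrightarrow> S3 t = 2 ^ n - 2 * int X"
      using even power_pred[OF n_pos, of "2::int"] by auto
    finally show ?thesis .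
  qed
  thus ?thesis by auto
qed

lemma weight_values:
  "2 ^ n - 2 * int (2 ^ (n - 1) - 2 ^ ((n + d - 2) div 2)) = 2 ^ ((n + d) div 2)"
  "2 ^ n - 2 * int (2 ^ (n - 1) + 2 ^ ((n + d - 2) div 2)) = - (2 ^ ((n + d) div 2))"
  "2 ^ n - 2 * int (2 ^ (n - 1) - 2 ^ ((n + 3 * d - 2) div 2)) = 2 ^ ((n + 3 * d) div 2)"
  "2 ^ n - 2 * int (2 ^ (n - 1) + 2 ^ ((n + 3 * d - 2) div 2)) = - (2 ^ ((n + 3 * d) div 2))"
proof -
  have "(n + d - 2) div 2 = (n + d) div 2 - 1" "(n + 3 * d - 2) div 2 = (n + 3 * d) div 2 - 1"
    "1 \<le> (n + d) div 2" "(n + d) div 2 \<le> n" "1 \<le> (n + 3 * d) div 2" "(n + 3 * d) div 2 \<le> n"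
    using h_facts exponents_ordered by simp_all
  thus "2 ^ n - 2 * int (2 ^ (n - 1) - 2 ^ ((n + d - 2) div 2)) = 2 ^ ((n + d) div 2)"
    "2 ^ n - 2 * int (2 ^ (n - 1) + 2 ^ ((n + d - 2) div 2)) = - (2 ^ ((n + d) div 2))"
    "2 ^ n - 2 * int (2 ^ (n - 1) - 2 ^ ((n + 3 * d - 2) div 2)) = 2 ^ ((n + 3 * d) div 2)"
    "2 ^ n - 2 * int (2 ^ (n - 1) + 2 ^ ((n + 3 * d - 2) div 2)) = - (2 ^ ((n + 3 * d) div 2))"
    using weight_shift by simp_all
qed

end

theorem theorem5:
  fixes n k d :: nat and p :: "'a::{field,finite}"
  assumes n_pos: "0 < n"
    and card_q: "CARD('a) = 2 ^ n"
    and k_range: "1 \<le> k" "k \<le> n - 1"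
    and k_not: "3 * k \<noteq> n" "3 * k \<noteq> 2 * n"
    and d_def: "d = gcd n k"
    and odd_nd: "odd (n div d)"
    and prim: "primitive_elem p"
  defines "S \<equiv> (\<lambda>(a::'a, b::'a, c::'a). S_sum n k a b c)"
    and "wt \<equiv> (\<lambda>(a::'a, b::'a, c::'a). cw_weight n k p a b c)"
  shows
    "(\<forall>t. S t \<in> {2 ^ ((n + d) div 2), - (2 ^ ((n + d) div 2)),
                  2 ^ ((n + 3*d) div 2), - (2 ^ ((n + 3*d) div 2)), 0, 2 ^ n})
   \<and> (\<forall>t. int (wt t) = 2 ^ (n - 1) - S t div 2)
   \<and> real (card {t. S t = 2 ^ ((n + d) div 2)})
       = (2 ^ (n - d - 1) + 2 ^ ((n - d - 2) div 2)) * (2 ^ n - 1)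
         * (2 ^ (n + 2*d) - 2 ^ n - 2 ^ (n - d) + 2 ^ (2*d)) / (2 ^ (2*d) - 1)
   \<and> real (card {t. wt t = 2 ^ (n - 1) - 2 ^ ((n + d - 2) div 2)})
       = (2 ^ (n - d - 1) + 2 ^ ((n - d - 2) div 2)) * (2 ^ n - 1)
         * (2 ^ (n + 2*d) - 2 ^ n - 2 ^ (n - d) + 2 ^ (2*d)) / (2 ^ (2*d) - 1)
   \<and> real (card {t. S t = - (2 ^ ((n + d) div 2))})
       = (2 ^ (n - d - 1) - 2 ^ ((n - d - 2) div 2)) * (2 ^ n - 1)
         * (2 ^ (n + 2*d) - 2 ^ n - 2 ^ (n - d) + 2 ^ (2*d)) / (2 ^ (2*d) - 1)
   \<and> real (card {t. wt t = 2 ^ (n - 1) + 2 ^ ((n + d - 2) div 2)})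
       = (2 ^ (n - d - 1) - 2 ^ ((n - d - 2) div 2)) * (2 ^ n - 1)
         * (2 ^ (n + 2*d) - 2 ^ n - 2 ^ (n - d) + 2 ^ (2*d)) / (2 ^ (2*d) - 1)
   \<and> real (card {t. S t = 2 ^ ((n + 3*d) div 2)})
       = (2 ^ (n - 3*d - 1) + 2 ^ ((n - 3*d - 2) div 2)) * (2 ^ (n - d) - 1)
         * (2 ^ n - 1) / (2 ^ (2*d) - 1)
   \<and> real (card {t. wt t = 2 ^ (n - 1) - 2 ^ ((n + 3*d - 2) div 2)})
       = (2 ^ (n - 3*d - 1) + 2 ^ ((n - 3*d - 2) div 2)) * (2 ^ (n - d) - 1)
         * (2 ^ n - 1) / (2 ^ (2*d) - 1)
   \<and> real (card {t. S t = - (2 ^ ((n + 3*d) div 2))})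
       = (2 ^ (n - 3*d - 1) - 2 ^ ((n - 3*d - 2) div 2)) * (2 ^ (n - d) - 1)
         * (2 ^ n - 1) / (2 ^ (2*d) - 1)
   \<and> real (card {t. wt t = 2 ^ (n - 1) + 2 ^ ((n + 3*d - 2) div 2)})
       = (2 ^ (n - 3*d - 1) - 2 ^ ((n - 3*d - 2) div 2)) * (2 ^ (n - d) - 1)
         * (2 ^ n - 1) / (2 ^ (2*d) - 1)
   \<and> real (card {t. S t = 0})
       = (2 ^ n - 1) * (2 ^ (2*n) - 2 ^ (2*n - d) + 2 ^ (2*n - 4*d) + 2 ^ n
                         - 2 ^ (n - d) - 2 ^ (n - 3*d) + 1)
   \<and> real (card {t. wt t = 2 ^ (n - 1)})
       = (2 ^ n - 1) * (2 ^ (2*n) - 2 ^ (2*n - d) + 2 ^ (2*n - 4*d) + 2 ^ n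
                         - 2 ^ (n - d) - 2 ^ (n - 3*d) + 1)
   \<and> card {t. S t = 2 ^ n} = 1
   \<and> card {t. wt t = 0} = 1"
proof -
  interpret main_setting n k d p
    by unfold_locales (use n_pos card_q k_range k_not d_def odd_nd prim in auto)
  have S_eq: "S = S3" unfolding S_def by (auto simp: S_sum_expsum)
  have S_values: "\<forall>t. S3 t \<in> {2 ^ ((n + d) div 2), - (2 ^ ((n + d) div 2)),
      2 ^ ((n + 3*d) div 2), - (2 ^ ((n + 3*d) div 2)), 0, 2 ^ n}"
    using S3_values h_facts(5,6) by simp
  have weight_formula: "\<forall>t. int (wt t) = 2 ^ (n - 1) - S3 t div 2"
    unfolding wt_def by (auto simp: weight_expsum)
  have weight_level: "card {t. wt t = X} = card {t. S3 t = 2 ^ n - 2 * int X}" for X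
    using weight_level_set[of X] unfolding wt_def by (simp add: case_prod_beta)
  have "2 ^ n - 2 * int (2 ^ (n - 1)) = 0" "2 ^ n - 2 * int 0 = (2::int) ^ n"
    using power_pred[OF n_pos, of "2::int"] by simp_all
  then show ?thesis
    unfolding S_eq weight_level weight_values
    using S_values weight_formula real_card_S3 card_S3_values(6) by simp
qed

end
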